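(* Let $f$, $g$, $\xi$, $F$ satisfy the standing assumptions below, and let $x$ be the unique continuous solution of $x'(t)=-f(x(t))+g(t)$, $t>0$, $x(0)=\xi$. Suppose that $f\in\mathrm{RV}_0(\beta)$ for some $\beta>1$, that $g\in\mathrm{RV}_\infty(-\theta)$ for some $\theta>0$, that $x(t)\to0$ as $t\to\infty$, and that \[ \lim_{t\to\infty}\frac{g(t)}{f(F^{-1}(t))}=L\in[0,\infty]. \] (i) If $L=0$, then $\lim_{t\to\infty}F(x(t))/t=1$. (ii) If $L\in(0,\infty)$, then $\lim_{t\to\infty}F(x(t))/t=\Lambda_*$, where $\Lambda_*\in(0,1)$ is the unique solution of $(1-\Lambda_* )\Lambda_*^{-\beta/(\beta-1)}=L$. (iii) If $L=\infty$, then $\lim_{t\to\infty}f(x(t))/g(t)=1$.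
   Context: Standing assumptions: $f\in C(\mathbb{R};\mathbb{R})$ is locally Lipschitz continuous on $\mathbb{R}$, $f(0)=0$ and $xf(x)>0$ for $x\neq0$; $g\in C([0,\infty);\mathbb{R})$ with $g(t)>0$ for $t>0$; $\xi>0$. $F(x)=\int_x^1 \frac{du}{f(u)}$ for $x>0$ (which tends to $+\infty$ as $x\to0^+$ since $f\in\mathrm{RV}_0(\beta)$ with $\beta>1$); $F^{-1}$ is the inverse of the strictly decreasing function $F$. $\mathrm{RV}_0(\beta)$: measurable positive $\varphi$ on $(0,\infty)$ with $\varphi(\lambda x)/\varphi(x)\to\lambda^\beta$ as $x\to0^+$ for every $\lambda>0$. $\mathrm{RV}_\infty(\alpha)$: measurable positive $h$ with $h(\lambda t)/h(t)\to\lambda^\alpha$ as $t\to\infty$ for every $\lambda>0$. *)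

theory Defs
  imports "HOL-Analysis.Analysis"
begin

definition Fint :: "(real \<Rightarrow> real) \<Rightarrow> real \<Rightarrow> real" where
  "Fint f y = (if y \<le> 1 then integral {y..1} (\<lambda>u. 1 / f u)
               else - integral {1..y} (\<lambda>u. 1 / f u))"

definition Finv :: "(real \<Rightarrow> real) \<Rightarrow> real \<Rightarrow> real" where
  "Finv f t = (THE y. y > 0 \<and> Fint f y = t)"

definition RV0 :: "real \<Rightarrow> (real \<Rightarrow> real) \<Rightarrow> bool" where
  "RV0 \<beta> \<phi> \<longleftrightarrow> (\<forall>y>0. \<phi> y > 0) \<and> set_borel_measurable borel {0<..} \<phi> \<and>
     (\<forall>c>0. ((\<lambda>y. \<phi> (c * y) / \<phi> y) \<longlongrightarrow> c powr \<beta>) (at_right 0))"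

definition RVinf :: "real \<Rightarrow> (real \<Rightarrow> real) \<Rightarrow> bool" where
  "RVinf \<alpha> h \<longleftrightarrow> (\<forall>t>0. h t > 0) \<and> set_borel_measurable borel {0<..} h \<and>
     (\<forall>c>0. ((\<lambda>t. h (c * t) / h t) \<longlongrightarrow> c powr \<alpha>) at_top)"

end

theory Submission
  imports Defs
begin

text \<open>
  Put \<open>u = F \<circ> x\<close> and \<open>\<phi> = f \<circ> F\<inverse>\<close>. Then \<open>u' = 1 - g(t) / \<phi>(u)\<close> and \<open>u \<rightarrow> \<infinity>\<close>. By the uniform
  convergence theorem, \<open>f \<in> RV\<^sub>0(\<beta>)\<close> gives \<open>F \<in> RV\<^sub>0(1 - \<beta>)\<close>, hence \<open>\<phi> \<in> RV\<^sub>\<infinity>(-\<beta>/(\<beta>-1))\<close>, and \<open>\<phi>\<close> is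
  almost decreasing. Compare \<open>u\<close> with a line \<open>a t\<close>: where they meet, \<open>u' - a\<close> is about
  \<open>1 - a - g(t) / \<phi>(a t)\<close>, and \<open>g(t) / \<phi>(a t) \<rightarrow> L a^(\<beta>/(\<beta>-1))\<close>. So the lines with
  \<open>(1 - a) a^(-\<beta>/(\<beta>-1)) > L\<close> end up below \<open>u\<close> and the others above it, which pins \<open>u(t)/t\<close>
  down to \<open>\<Lambda>\<^sub>*\<close> (to \<open>1\<close> if \<open>L = 0\<close>).

  If \<open>L = \<infinity>\<close>, the same comparison gives \<open>u = o(t)\<close>. While \<open>\<phi>(u)/g\<close> stays away from \<open>1\<close>, \<open>u\<close>
  moves monotonically at a rate bounded below; as \<open>0 \<le> u = o(t)\<close>, an excursion ending at \<open>t\<close>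
  must have started after \<open>(1 - \<eta>) t\<close>. Over such a time span \<open>g\<close> (regularly varying) and \<open>\<phi>(u)\<close>
  (almost monotone) change by factors close to \<open>1\<close>, so the ratio cannot have left a neighbourhood
  of \<open>1\<close>.
\<close>

section \<open>Uniform convergence for regularly varying functions\<close>

lemma uniform_small_increments:
  fixes k :: "real \<Rightarrow> real"
  assumes kc: "continuous_on UNIV k"
    and lim: "\<And>v. ((\<lambda>x. k (x + v) - k x) \<longlongrightarrow> 0) at_top"
    and eps: "\<epsilon> > 0"
  shows "\<exists>\<delta>>0. \<exists>X. \<forall>x\<ge>X. \<forall>v. \<bar>v\<bar> < \<delta> \<longrightarrow> \<bar>k (x + v) - k x\<bar> < \<epsilon>"
proof -
  define E where "E n = {v\<in>{0..1}. \<forall>x\<ge>real n. \<bar>k (x + v) - k x\<bar> \<le> \<epsilon> / 3}" for n :: nat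
  have closedE: "closed (E n)" for n
  proof -
    have "E n = {0..1} \<inter> (\<Inter>x\<in>{real n..}. {v. \<bar>k (x + v) - k x\<bar> \<le> \<epsilon> / 3})"
      unfolding E_def by auto
    moreover have "closed {v. \<bar>k (x + v) - k x\<bar> \<le> \<epsilon> / 3}" for x
      by (intro closed_Collect_le continuous_intros continuous_on_compose2[OF kc]) auto
    ultimately show ?thesis by (simp add: closed_INT closed_Int)
  qed
  have cover: "{0..1} \<subseteq> (\<Union>n. E n)"
  proof
    fix v :: real assume v: "v \<in> {0..1}"
    have "eventually (\<lambda>x. \<bar>k (x + v) - k x\<bar> < \<epsilon> / 3) at_top"
      using lim[of v, unfolded tendsto_iff dist_real_def, rule_format, of "\<epsilon> / 3"] eps by simp
    then obtain N where N: "\<forall>x\<ge>N. \<bar>k (x + v) - k x\<bar> < \<epsilon> / 3"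
      by (auto simp: eventually_at_top_linorder)
    obtain n :: nat where "N \<le> real n" using real_arch_simple by blast
    hence "v \<in> E n" using N v unfolding E_def by (auto intro: less_imp_le)
    thus "v \<in> (\<Union>n. E n)" by blast
  qed
  \<comment> \<open>Baire: some \<open>E n\<close> contains a ball, and differences of its points cover a neighbourhood of 0.\<close>
  have "\<exists>n. interior (E n) \<noteq> {}"
  proof (rule ccontr)
    assume "\<not> ?thesis"
    hence "euclidean interior_of (\<Union>(range E)) = {}"
      by (intro Baire_category_alt) (auto simp: completely_metrizable_space_euclidean closedE)
    moreover have "{0<..<1} \<subseteq> interior (\<Union>(range E))"
      using cover by (intro interior_maximal) auto
    moreover have "(1/2::real) \<in> {0<..<1}" by simp
    ultimately show False by auto
  qed
  then obtain n v0 where "v0 \<in> interior (E n)" by blast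
  then obtain r where r: "r > 0" "ball v0 r \<subseteq> E n" by (auto simp: mem_interior)
  have "\<bar>k (x + v) - k x\<bar> < \<epsilon>" if x: "real n + 1 \<le> x" and v: "\<bar>v\<bar> < min r 1" for x v
  proof -
    have "v0 - v \<in> E n" using r v by (auto simp: dist_real_def)
    moreover have "real n \<le> x + v" using x v by auto
    ultimately have "\<bar>k ((x + v) + (v0 - v)) - k (x + v)\<bar> \<le> \<epsilon> / 3" unfolding E_def by blast
    hence "\<bar>k (x + v0) - k (x + v)\<bar> \<le> \<epsilon> / 3" by simp
    moreover have "v0 \<in> E n" using r by auto
    hence "\<bar>k (x + v0) - k x\<bar> \<le> \<epsilon> / 3" using x unfolding E_def by auto
    ultimately show ?thesis using eps unfolding abs_le_iff abs_less_iff by linarith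
  qed
  thus ?thesis using r by (intro exI[of _ "min r 1"]) auto
qed

lemma uniform_bounded_increments:
  fixes k :: "real \<Rightarrow> real"
  assumes kc: "continuous_on UNIV k"
    and lim: "\<And>v. ((\<lambda>x. k (x + v) - k x) \<longlongrightarrow> 0) at_top"
    and eps: "\<epsilon> > 0"
  shows "\<exists>X. \<forall>x\<ge>X. \<forall>v. \<bar>v\<bar> \<le> V \<longrightarrow> \<bar>k (x + v) - k x\<bar> < \<epsilon>"
proof -
  obtain \<delta> X0 where d: "\<delta> > 0" and X0: "\<forall>x\<ge>X0. \<forall>v. \<bar>v\<bar> < \<delta> \<longrightarrow> \<bar>k (x + v) - k x\<bar> < \<epsilon>/2"
    using uniform_small_increments[OF kc lim, of "\<epsilon>/2"] eps by auto
  \<comment> \<open>Pass from \<open>x\<close> to \<open>x + v\<close> via the nearest grid point \<open>j \<delta>/2\<close> below \<open>v\<close>.\<close>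
  define N where "N = \<lceil>2 * \<bar>V\<bar> / \<delta>\<rceil>"
  have "eventually (\<lambda>x. \<forall>j\<in>{-N..N}. \<bar>k (x + of_int j * (\<delta>/2)) - k x\<bar> < \<epsilon>/2) at_top"
  proof (intro eventually_ball_finite ballI)
    fix j assume "j \<in> {-N..N}"
    show "eventually (\<lambda>x. \<bar>k (x + of_int j * (\<delta>/2)) - k x\<bar> < \<epsilon>/2) at_top"
      using lim[of "of_int j * (\<delta>/2)", unfolded tendsto_iff dist_real_def, rule_format, of "\<epsilon>/2"] eps
      by simp
  qed auto
  then obtain X1 where X1: "\<forall>x\<ge>X1. \<forall>j\<in>{-N..N}. \<bar>k (x + of_int j * (\<delta>/2)) - k x\<bar> < \<epsilon>/2"
    by (auto simp: eventually_at_top_linorder)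
  show ?thesis
  proof (intro exI[of _ "max X1 (X0 + \<bar>V\<bar> + \<delta>)"] allI impI)
    fix x v assume x: "max X1 (X0 + \<bar>V\<bar> + \<delta>) \<le> x" and v: "\<bar>v\<bar> \<le> V"
    define j where "j = \<lfloor>v / (\<delta>/2)\<rfloor>"
    have jv: "of_int j \<le> v / (\<delta>/2)" "v / (\<delta>/2) < of_int j + 1" unfolding j_def by linarith+
    have Nv: "2 * \<bar>V\<bar> / \<delta> \<le> of_int N" unfolding N_def by (rule le_of_int_ceiling)
    have "v / (\<delta>/2) \<le> 2 * \<bar>V\<bar> / \<delta>" "- (2 * \<bar>V\<bar> / \<delta>) \<le> v / (\<delta>/2)"
      using v d by (auto simp: field_simps)
    hence "real_of_int j \<le> of_int N" "real_of_int (- N) < of_int (j + 1)" using jv Nv by simp_all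
    hence jN: "j \<in> {-N..N}" unfolding of_int_le_iff of_int_less_iff by simp
    define w where "w = of_int j * (\<delta>/2)"
    have w: "w \<le> v" "v < w + \<delta>/2" using jv d unfolding w_def by (auto simp: field_simps)
    have "\<bar>k (x + w) - k x\<bar> < \<epsilon>/2" using X1 x jN unfolding w_def by auto
    moreover have "\<bar>k (x + v) - k (x + w)\<bar> < \<epsilon>/2"
      using X0[rule_format, of "x + w" "v - w"] w v x d by auto
    ultimately show "\<bar>k (x + v) - k x\<bar> < \<epsilon>" unfolding abs_less_iff by linarith
  qed
qed

text \<open>Karamata's representation: in logarithmic variables a regularly varying function is a power
  times \<open>exp \<circ> k\<close> with \<open>k\<close> slowly additive.\<close>

lemma regularly_varying_log_increments:
  fixes h :: "real \<Rightarrow> real"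
  assumes hc: "continuous_on {0<..} h" and hpos: "\<And>t. t > 0 \<Longrightarrow> h t > 0"
    and hrv: "\<And>c. c > 0 \<Longrightarrow> ((\<lambda>t. h (c * t) / h t) \<longlongrightarrow> c powr \<alpha>) at_top"
  shows "continuous_on UNIV (\<lambda>x. ln (h (exp x)) - \<alpha> * x)"
    and "((\<lambda>x. (ln (h (exp (x + v))) - \<alpha> * (x + v)) - (ln (h (exp x)) - \<alpha> * x)) \<longlongrightarrow> 0) at_top"
proof -
  have "continuous_on UNIV (\<lambda>x. h (exp x))"
    by (rule continuous_on_compose2[OF hc]) (auto intro!: continuous_intros)
  moreover have "h (exp x) \<noteq> 0" for x using hpos[of "exp x"] by simp
  ultimately show "continuous_on UNIV (\<lambda>x. ln (h (exp x)) - \<alpha> * x)"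
    by (auto intro!: continuous_intros continuous_on_ln)
  have shift: "(ln (h (exp (x + v))) - \<alpha> * (x + v)) - (ln (h (exp x)) - \<alpha> * x)
      = ln (h (exp v * exp x) / h (exp x)) - \<alpha> * v" for x
    using hpos[of "exp x"] hpos[of "exp v * exp x"] by (simp add: exp_add ln_div algebra_simps)
  have "((\<lambda>x. h (exp v * exp x) / h (exp x)) \<longlongrightarrow> exp v powr \<alpha>) at_top"
    by (rule filterlim_compose[OF hrv exp_at_top]) simp
  hence "((\<lambda>x. ln (h (exp v * exp x) / h (exp x)) - \<alpha> * v) \<longlongrightarrow> ln (exp v powr \<alpha>) - \<alpha> * v) at_top"
    by (intro tendsto_intros) auto
  moreover have "ln (exp v powr \<alpha>) - \<alpha> * v = 0" by (simp add: powr_def)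
  ultimately have "((\<lambda>x. ln (h (exp v * exp x) / h (exp x)) - \<alpha> * v) \<longlongrightarrow> 0) at_top" by simp
  thus "((\<lambda>x. (ln (h (exp (x + v))) - \<alpha> * (x + v)) - (ln (h (exp x)) - \<alpha> * x)) \<longlongrightarrow> 0) at_top"
    by (rule Lim_transform_eventually) (use shift in \<open>auto intro: always_eventually\<close>)
qed

lemma regularly_varying_uniform:
  fixes h :: "real \<Rightarrow> real"
  assumes hc: "continuous_on {0<..} h" and hpos: "\<And>t. t > 0 \<Longrightarrow> h t > 0"
    and hrv: "\<And>c. c > 0 \<Longrightarrow> ((\<lambda>t. h (c * t) / h t) \<longlongrightarrow> c powr \<alpha>) at_top"
    and a: "0 < a" and eps: "\<epsilon> > 0"
  shows "\<forall>\<^sub>F t in at_top. \<forall>s\<in>{a..b}.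
           (1 - \<epsilon>) * (s powr \<alpha> * h t) \<le> h (s * t) \<and> h (s * t) \<le> (1 + \<epsilon>) * (s powr \<alpha> * h t)"
proof -
  define k where "k x = ln (h (exp x)) - \<alpha> * x" for x
  have kc: "continuous_on UNIV k"
    unfolding k_def by (rule regularly_varying_log_increments(1)[OF hc hpos hrv])
  have kl: "((\<lambda>x. k (x + v) - k x) \<longlongrightarrow> 0) at_top" for v
    unfolding k_def using regularly_varying_log_increments(2)[OF hc hpos hrv, of v] by simp
  obtain X where X: "\<forall>x\<ge>X. \<forall>v. \<bar>v\<bar> \<le> max \<bar>ln a\<bar> \<bar>ln b\<bar> \<longrightarrow> \<bar>k (x + v) - k x\<bar> < ln (1 + \<epsilon>)"
    using uniform_bounded_increments[OF kc kl, of "ln (1 + \<epsilon>)" "max \<bar>ln a\<bar> \<bar>ln b\<bar>"] eps by auto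
  have "(1 - \<epsilon>) * (s powr \<alpha> * h t) \<le> h (s * t) \<and> h (s * t) \<le> (1 + \<epsilon>) * (s powr \<alpha> * h t)"
    if t: "exp X \<le> t" and s: "a \<le> s" "s \<le> b" for s t
  proof -
    have tpos: "t > 0" using t exp_gt_zero[of X] by linarith
    have spos: "s > 0" using s a by linarith
    define D where "D = k (ln t + ln s) - k (ln t)"
    have "ln a \<le> ln s" "ln s \<le> ln b" using s a by auto
    hence "X \<le> ln t" "\<bar>ln s\<bar> \<le> max \<bar>ln a\<bar> \<bar>ln b\<bar>"
      using t tpos by (auto simp: ln_ge_iff)
    hence "\<bar>D\<bar> < ln (1 + \<epsilon>)" using X unfolding D_def by blast
    hence "exp D < exp (ln (1 + \<epsilon>))" "exp (- ln (1 + \<epsilon>)) < exp D"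
      unfolding abs_less_iff exp_less_cancel_iff by linarith+
    hence "exp D < 1 + \<epsilon>" "1 / (1 + \<epsilon>) < exp D"
      using eps by (simp_all add: exp_minus inverse_eq_divide)
    moreover have "1 - \<epsilon> \<le> 1 / (1 + \<epsilon>)" using eps by (simp add: field_simps)
    ultimately have D: "1 - \<epsilon> \<le> exp D" "exp D \<le> 1 + \<epsilon>" by linarith+
    have "exp (ln t + ln s) = s * t" "exp (ln t) = t" using tpos spos by (simp_all add: exp_add)
    hence "D = ln (h (s * t)) - ln (h t) - \<alpha> * ln s" unfolding D_def k_def by (simp add: algebra_simps)
    hence "exp D = h (s * t) / h t / s powr \<alpha>"
      using hpos[OF tpos] hpos[of "s * t"] tpos spos by (simp add: exp_diff powr_def)
    hence hst: "h (s * t) = exp D * (s powr \<alpha> * h t)" using hpos[OF tpos] spos by simp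
    have "s powr \<alpha> * h t > 0" using hpos[OF tpos] spos by simp
    thus ?thesis unfolding hst using D by (simp add: mult_right_mono)
  qed
  thus ?thesis unfolding eventually_at_top_linorder by (intro exI[of _ "exp X"]) auto
qed


lemma powr_close_to_one:
  fixes \<alpha> e :: real
  assumes e: "e > 0"
  obtains \<eta> where "0 < \<eta>" "\<eta> < 1" "\<And>s. s \<in> {1-\<eta>..1} \<Longrightarrow> \<bar>s powr \<alpha> - 1\<bar> \<le> e"
proof -
  have "((\<lambda>x. x powr \<alpha>) \<longlongrightarrow> 1 powr \<alpha>) (at 1)" by (intro tendsto_intros) auto
  then obtain r where r: "r > 0" "\<And>x. x \<noteq> 1 \<Longrightarrow> \<bar>x - 1\<bar> < r \<Longrightarrow> \<bar>x powr \<alpha> - 1\<bar> < e"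
    using e unfolding LIM_eq by (force simp: dist_real_def)
  define \<eta> where "\<eta> = min (r / 2) (1 / 2)"
  have \<eta>: "0 < \<eta>" "\<eta> < 1" "\<eta> < r" using r by (auto simp: \<eta>_def)
  have "\<bar>s powr \<alpha> - 1\<bar> \<le> e" if "s \<in> {1-\<eta>..1}" for s
    using r(2)[of s] that \<eta> e by (cases "s = 1") auto
  thus ?thesis using that \<eta> by blast
qed

lemma regularly_varying_near_one:
  fixes h :: "real \<Rightarrow> real"
  assumes hc: "continuous_on {0<..} h" and hpos: "\<And>t. t > 0 \<Longrightarrow> h t > 0"
    and hrv: "\<And>c. c > 0 \<Longrightarrow> ((\<lambda>t. h (c * t) / h t) \<longlongrightarrow> c powr \<alpha>) at_top"
    and eps: "\<epsilon> > 0"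
  shows "\<exists>\<eta>>0. \<eta> < 1 \<and>
           (\<forall>\<^sub>F t in at_top. \<forall>s\<in>{1-\<eta>..1}. (1 - \<epsilon>) * h t \<le> h (s * t) \<and> h (s * t) \<le> (1 + \<epsilon>) * h t)"
proof -
  define e where "e = min \<epsilon> 1 / 3"
  have e: "0 < e" "e \<le> 1" "3 * e \<le> \<epsilon>" using eps by (auto simp: e_def)
  obtain \<eta> where \<eta>: "0 < \<eta>" "\<eta> < 1" and powr_near: "\<And>s. s \<in> {1-\<eta>..1} \<Longrightarrow> \<bar>s powr \<alpha> - 1\<bar> \<le> e"
    using powr_close_to_one[OF e(1)] by blast
  have sq: "1 - \<epsilon> \<le> (1 - e) * (1 - e)" "(1 + e) * (1 + e) \<le> 1 + \<epsilon>"
  proof -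
    have "e * e \<le> e" using e by (intro mult_left_le_one_le) auto
    moreover have "(1 - e) * (1 - e) = 1 - 2 * e + e * e" "(1 + e) * (1 + e) = 1 + 2 * e + e * e"
      by (simp_all add: algebra_simps)
    ultimately show "1 - \<epsilon> \<le> (1 - e) * (1 - e)" "(1 + e) * (1 + e) \<le> 1 + \<epsilon>"
      using e by (smt (verit) zero_le_square)+
  qed
  have "\<forall>\<^sub>F t in at_top. \<forall>s\<in>{1-\<eta>..1}.
          (1 - e) * (s powr \<alpha> * h t) \<le> h (s * t) \<and> h (s * t) \<le> (1 + e) * (s powr \<alpha> * h t)"
    using \<eta> e by (intro regularly_varying_uniform[OF hc hpos hrv]) auto
  moreover have "\<forall>\<^sub>F t in at_top. (t::real) > 0" by (rule eventually_gt_at_top)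
  ultimately have "\<forall>\<^sub>F t in at_top. \<forall>s\<in>{1-\<eta>..1}. (1 - \<epsilon>) * h t \<le> h (s * t) \<and> h (s * t) \<le> (1 + \<epsilon>) * h t"
  proof eventually_elim
    case (elim t)
    show ?case
    proof
      fix s assume s: "s \<in> {1-\<eta>..1}"
      have ht: "h t > 0" using hpos elim by auto
      have p: "1 - e \<le> s powr \<alpha>" "s powr \<alpha> \<le> 1 + e"
        using powr_near[OF s] unfolding abs_le_iff by linarith+
      have "(1 - \<epsilon>) * h t \<le> ((1 - e) * (1 - e)) * h t"
        using sq ht by (intro mult_right_mono) auto
      also have "\<dots> \<le> (1 - e) * (s powr \<alpha> * h t)"
        using p e ht by (simp add: mult.assoc mult_left_mono mult_right_mono)
      also have "\<dots> \<le> h (s * t)" using elim s by auto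
      finally have lo: "(1 - \<epsilon>) * h t \<le> h (s * t)" .
      have "h (s * t) \<le> (1 + e) * (s powr \<alpha> * h t)" using elim s by auto
      also have "\<dots> \<le> ((1 + e) * (1 + e)) * h t"
        using p e ht by (simp add: mult.assoc mult_left_mono mult_right_mono)
      also have "\<dots> \<le> (1 + \<epsilon>) * h t"
        using sq ht by (intro mult_right_mono) auto
      finally show "(1 - \<epsilon>) * h t \<le> h (s * t) \<and> h (s * t) \<le> (1 + \<epsilon>) * h t" using lo by simp
    qed
  qed
  thus ?thesis using \<eta> by blast
qed

section \<open>Barrier arguments\<close>

lemma exists_first_nonneg:
  fixes w :: "real \<Rightarrow> real"
  assumes ab: "a < b" and wc: "continuous_on {a..b} w" and wa: "w a < 0" and wb: "w b \<ge> 0"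
  shows "\<exists>c. a < c \<and> c \<le> b \<and> w c \<ge> 0 \<and> (\<forall>s. a \<le> s \<and> s < c \<longrightarrow> w s < 0)"
proof -
  define S where "S = {a..b} \<inter> w -` {0..}"
  have "closed S" unfolding S_def by (rule continuous_closed_preimage[OF wc]) auto
  moreover have "b \<in> S" using wb ab unfolding S_def by auto
  moreover have bdd: "bdd_below S" unfolding S_def by (auto intro: bdd_belowI[of _ a])
  ultimately have "Inf S \<in> S" by (intro closed_contains_Inf) auto
  hence c: "a \<le> Inf S" "Inf S \<le> b" "w (Inf S) \<ge> 0" unfolding S_def by auto
  have "w s < 0" if "a \<le> s" "s < Inf S" for s
    using that c cInf_lower[OF _ bdd, of s] unfolding S_def by force
  moreover have "Inf S \<noteq> a" using c wa by auto
  ultimately show ?thesis using c by (intro exI[of _ "Inf S"]) auto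
qed

lemma exists_last_nonpos_or_start:
  fixes w :: "real \<Rightarrow> real"
  assumes ab: "a < b" and wc: "continuous_on {a..b} w" and wb: "w b > 0"
  shows "\<exists>c. a \<le> c \<and> c < b \<and> (c = a \<or> w c \<le> 0) \<and> (\<forall>s. c < s \<and> s \<le> b \<longrightarrow> w s > 0)"
proof (cases "\<exists>s\<in>{a..b}. w s \<le> 0")
  case True
  define S where "S = {a..b} \<inter> w -` {..0}"
  have "closed S" unfolding S_def by (rule continuous_closed_preimage[OF wc]) auto
  moreover have "S \<noteq> {}" using True unfolding S_def by auto
  moreover have bdd: "bdd_above S" unfolding S_def by (auto intro: bdd_aboveI[of _ b])
  ultimately have "Sup S \<in> S" by (intro closed_contains_Sup) auto
  hence c: "a \<le> Sup S" "Sup S \<le> b" "w (Sup S) \<le> 0" unfolding S_def by auto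
  have "w s > 0" if "Sup S < s" "s \<le> b" for s
    using that c cSup_upper[OF _ bdd, of s] unfolding S_def by force
  moreover have "Sup S \<noteq> b" using c wb by auto
  ultimately show ?thesis using c by (intro exI[of _ "Sup S"]) auto
qed (use ab in \<open>auto simp: not_le intro!: exI[of _ a]\<close>)

lemma barrier_eventually_neg:
  fixes w w' :: "real \<Rightarrow> real"
  assumes der: "\<And>t. t > T \<Longrightarrow> (w has_real_derivative w' t) (at t)"
    and neg: "\<And>t. t > T \<Longrightarrow> w t \<ge> 0 \<Longrightarrow> w' t \<le> -\<kappa>" and k: "\<kappa> > 0"
  shows "\<forall>\<^sub>F t in at_top. w t < 0"
proof -
  have cont: "continuous_on {a..b} w" if "T < a" for a b
    using that by (auto intro!: continuous_at_imp_continuous_on DERIV_isCont der)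
  \<comment> \<open>While \<open>w \<ge> 0\<close> it decreases at rate \<open>\<kappa>\<close>, so it becomes negative \<dots>\<close>
  have "\<exists>t0>T. w t0 < 0"
  proof (rule ccontr)
    assume "\<not> ?thesis"
    hence nn: "\<And>t. t > T \<Longrightarrow> w t \<ge> 0" by force
    define a where "a = T + 1"
    define b where "b = a + (\<bar>w a\<bar> + 1) / \<kappa>"
    have ab: "a < b" "T < a" using k by (simp_all add: a_def b_def)
    obtain z where z: "a < z" "z < b" "w b - w a = (b - a) * w' z"
      using MVT2[OF ab(1), of w w'] der ab by force
    have "(b - a) * w' z \<le> (b - a) * (-\<kappa>)" using neg nn z ab by (intro mult_left_mono) auto
    also have "(b - a) * (-\<kappa>) = - (\<bar>w a\<bar> + 1)" using k unfolding b_def by (simp add: field_simps)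
    finally show False using z(3) nn[of b] ab by linarith
  qed
  then obtain t0 where t0: "t0 > T" "w t0 < 0" by blast
  \<comment> \<open>\<dots> and it cannot return to \<open>[0, \<infinity>)\<close>, since at a first return it would be decreasing.\<close>
  have "w t < 0" if t: "t \<ge> t0" for t
  proof (rule ccontr)
    assume "\<not> w t < 0"
    moreover have "t0 < t" using t t0 \<open>\<not> w t < 0\<close> by (cases "t = t0") auto
    ultimately obtain c where c: "t0 < c" "w c \<ge> 0" "\<forall>s. t0 \<le> s \<and> s < c \<longrightarrow> w s < 0"
      using exists_first_nonneg[OF _ cont[OF t0(1)] t0(2)] by (metis not_less)
    have "w' c < 0" using neg[of c] c t0 k by auto
    then obtain d where d: "d > 0" "\<forall>h>0. h < d \<longrightarrow> w c < w (c - h)"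
      using DERIV_neg_dec_left[OF der[of c]] c t0 by force
    define h where "h = min (d/2) ((c - t0)/2)"
    have "h \<le> d/2" "h \<le> (c - t0)/2" unfolding h_def by (rule min.cobounded1, rule min.cobounded2)
    moreover have "h > 0" using d c by (simp add: h_def)
    ultimately have "h > 0" "h < d" "t0 \<le> c - h" "c - h < c" using d(1) c(1) by auto
    hence "w c < w (c - h)" "w (c - h) < 0" using d c by auto
    thus False using c(2) by linarith
  qed
  thus ?thesis unfolding eventually_at_top_linorder by blast
qed

lemma exists_factor_less:
  fixes c d :: real
  assumes "d < c"
  shows "\<exists>\<delta>>0. (1 + \<delta>) * d < c"
proof (cases "d \<le> 0")
  case True
  thus ?thesis using assms by (intro exI[of _ 1]) auto
next
  case False
  have "(1 + (c - d) / (2 * d)) * d = d + (c - d) / 2" using False by (simp add: field_simps)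
  also have "\<dots> < c" using assms by (simp add: field_simps)
  finally show ?thesis using False assms by (intro exI[of _ "(c - d) / (2 * d)"]) auto
qed

section \<open>The integral \<open>F\<close> and its inverse\<close>

locale rv_zero =
  fixes f :: "real \<Rightarrow> real" and \<beta> :: real
  assumes f_cont: "continuous_on {0<..} f"
    and f_pos: "\<And>y. y > 0 \<Longrightarrow> f y > 0"
    and f_rv: "\<And>c. c > 0 \<Longrightarrow> ((\<lambda>y. f (c * y) / f y) \<longlongrightarrow> c powr \<beta>) (at_right 0)"
    and beta_gt_1: "\<beta> > 1"
begin

lemma f_uniform:
  assumes a: "0 < a" "a \<le> b" and eps: "\<epsilon> > 0"
  shows "\<forall>\<^sub>F y in at_right 0. \<forall>s\<in>{a..b}.
           (1 - \<epsilon>) * (s powr \<beta> * f y) \<le> f (s * y) \<and> f (s * y) \<le> (1 + \<epsilon>) * (s powr \<beta> * f y)"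
proof -
  define h where "h t = f (inverse t)" for t
  have hc: "continuous_on {0<..} h"
    unfolding h_def by (rule continuous_on_compose2[OF f_cont]) (auto intro!: continuous_intros)
  have hpos: "h t > 0" if "t > 0" for t using f_pos that by (simp add: h_def)
  have hrv: "((\<lambda>t. h (c * t) / h t) \<longlongrightarrow> c powr (- \<beta>)) at_top" if c: "c > 0" for c
  proof -
    have "((\<lambda>t. f (inverse c * inverse t) / f (inverse t)) \<longlongrightarrow> inverse c powr \<beta>) at_top"
      using c by (intro filterlim_compose[OF f_rv filterlim_inverse_at_right_top]) auto
    thus ?thesis using c by (simp add: h_def powr_minus inverse_eq_divide powr_divide mult.commute)
  qed
  have "\<forall>\<^sub>F t in at_top. \<forall>s\<in>{inverse b..inverse a}.
          (1 - \<epsilon>) * (s powr - \<beta> * h t) \<le> h (s * t) \<and> h (s * t) \<le> (1 + \<epsilon>) * (s powr - \<beta> * h t)"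
    using a eps by (intro regularly_varying_uniform[OF hc hpos hrv]) auto
  thus ?thesis unfolding eventually_at_right_to_top
  proof eventually_elim
    case (elim t)
    show ?case
    proof
      fix s assume s: "s \<in> {a..b}"
      hence "inverse s \<in> {inverse b..inverse a}" "s > 0" using a by auto
      moreover have "inverse s powr - \<beta> = s powr \<beta>" "inverse (inverse s * t) = s * inverse t"
        using \<open>s > 0\<close> by (simp_all add: powr_minus_divide inverse_eq_divide powr_divide)
      ultimately show "(1 - \<epsilon>) * (s powr \<beta> * f (inverse t)) \<le> f (s * inverse t)
          \<and> f (s * inverse t) \<le> (1 + \<epsilon>) * (s powr \<beta> * f (inverse t))"
        using elim unfolding h_def by metis
    qed
  qed
qed

lemma f_almost_increasing:
  assumes d: "\<delta> > 0"
  shows "\<exists>y0>0. \<forall>y y'. 0 < y \<and> y \<le> y' \<and> y' \<le> y0 \<longrightarrow> f y \<le> (1 + \<delta>) * f y'"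
proof -
  define \<epsilon> where "\<epsilon> = min \<delta> (2 powr \<beta> - 1)"
  have two_powr: "2 powr \<beta> > 1" using beta_gt_1 by simp
  hence eps: "\<epsilon> > 0" "\<epsilon> \<le> \<delta>" "1 + \<epsilon> \<le> 2 powr \<beta>" using d by (auto simp: \<epsilon>_def)
  obtain y1 where y1: "y1 > 0"
    and U: "\<And>y s. 0 < y \<Longrightarrow> y < y1 \<Longrightarrow> s \<in> {1/2..1} \<Longrightarrow> f (s * y) \<le> (1 + \<epsilon>) * (s powr \<beta> * f y)"
    using f_uniform[of "1/2" 1 \<epsilon>] eps unfolding eventually_at_right_field by force
  have scale: "f (s * y) \<le> (1 + \<delta>) * f y" if "0 < y" "y < y1" "s \<in> {1/2..1}" for s y
  proof -
    have "s powr \<beta> \<le> 1" using that beta_gt_1 by (intro powr_le1) auto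
    hence "(1 + \<epsilon>) * (s powr \<beta> * f y) \<le> (1 + \<delta>) * (1 * f y)"
      using eps f_pos[of y] that by (intro mult_mono) auto
    thus ?thesis using U[OF that] by simp
  qed
  have halve: "f (y / 2) \<le> f y" if "0 < y" "y < y1" for y
  proof -
    have "(1 + \<epsilon>) * ((1/2) powr \<beta>) \<le> 1"
      using eps two_powr by (simp add: powr_divide divide_le_eq)
    hence "(1 + \<epsilon>) * ((1/2) powr \<beta> * f y) \<le> f y"
      using f_pos[of y] that by (simp add: mult.assoc[symmetric] mult_le_cancel_right1)
    thus ?thesis using U[OF that, of "1/2"] by simp
  qed
  \<comment> \<open>Induction over the number of halvings separating \<open>y\<close> from \<open>y'\<close>.\<close>
  have dyadic: "f y \<le> (1 + \<delta>) * f y'" if "0 < y'" "y' < y1" "y' / 2 ^ n \<le> y" "y \<le> y'" for n y y'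
    using that
  proof (induction n arbitrary: y')
    case 0
    thus ?case using f_pos[of y] d by simp
  next
    case (Suc n)
    show ?case
    proof (cases "y' / 2 \<le> y")
      case True
      thus ?thesis using scale[of y' "y / y'"] Suc.prems by (simp add: field_simps)
    next
      case False
      hence "f y \<le> (1 + \<delta>) * f (y' / 2)" using Suc by (intro Suc.IH) (auto simp: field_simps)
      also have "\<dots> \<le> (1 + \<delta>) * f y'" using halve Suc.prems d by (intro mult_left_mono) auto
      finally show ?thesis .
    qed
  qed
  show ?thesis
  proof (intro exI[of _ "y1 / 2"] conjI allI impI)
    fix y y' assume h: "0 < y \<and> y \<le> y' \<and> y' \<le> y1 / 2"
    obtain n where "y' / y < 2 ^ n" using real_arch_pow[of 2 "y' / y"] by auto
    hence "y' / 2 ^ n \<le> y" using h by (simp add: field_simps)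
    thus "f y \<le> (1 + \<delta>) * f y'" using dyadic[of y'] h y1 by auto
  qed (use y1 in auto)
qed

lemma continuous_on_inverse_f:
  assumes "0 < a" shows "continuous_on {a..b} (\<lambda>u. 1 / f u)"
proof -
  have "f u \<noteq> 0" if "u \<in> {a..b}" for u using f_pos[of u] assms that by auto
  thus ?thesis using assms
    by (intro continuous_on_divide continuous_on_const continuous_on_subset[OF f_cont]) auto
qed

lemma integrable_inverse_f: "0 < a \<Longrightarrow> (\<lambda>u. 1 / f u) integrable_on {a..b}"
  by (rule integrable_continuous_interval[OF continuous_on_inverse_f])

lemma Fint_eq_integral_diff:
  assumes a: "0 < a" "a \<le> 1" and y: "a \<le> y"
  shows "Fint f y = integral {a..1} (\<lambda>u. 1 / f u) - integral {a..y} (\<lambda>u. 1 / f u)"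
proof (cases "y \<le> 1")
  case True
  have "integral {a..y} (\<lambda>u. 1 / f u) + integral {y..1} (\<lambda>u. 1 / f u) = integral {a..1} (\<lambda>u. 1 / f u)"
    using True y a integrable_inverse_f by (intro Henstock_Kurzweil_Integration.integral_combine) auto
  thus ?thesis using True unfolding Fint_def by simp
next
  case False
  have "integral {a..1} (\<lambda>u. 1 / f u) + integral {1..y} (\<lambda>u. 1 / f u) = integral {a..y} (\<lambda>u. 1 / f u)"
    using False y a integrable_inverse_f by (intro Henstock_Kurzweil_Integration.integral_combine) auto
  thus ?thesis using False unfolding Fint_def by simp
qed

lemma has_real_derivative_Fint:
  assumes y: "y > 0"
  shows "(Fint f has_real_derivative - (1 / f y)) (at y)"
proof -
  define a where "a = min (y/2) (1/2)"
  have a: "0 < a" "a \<le> 1" "a < y" using y unfolding a_def by auto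
  have "((\<lambda>x. integral {a..x} (\<lambda>u. 1 / f u)) has_real_derivative 1 / f y) (at y within {a..y+1})"
    using a by (intro integral_has_real_derivative continuous_on_inverse_f) auto
  moreover have "at y within {a..y+1} = at y" using a by (intro at_within_interior) auto
  ultimately have "((\<lambda>x. integral {a..x} (\<lambda>u. 1 / f u)) has_real_derivative 1 / f y) (at y)" by simp
  hence der: "((\<lambda>x. integral {a..1} (\<lambda>u. 1 / f u) - integral {a..x} (\<lambda>u. 1 / f u))
      has_real_derivative 0 - 1 / f y) (at y)"
    by (rule DERIV_diff[OF DERIV_const])
  have ev: "\<forall>\<^sub>F x in nhds y. Fint f x = integral {a..1} (\<lambda>u. 1 / f u) - integral {a..x} (\<lambda>u. 1 / f u)"
    unfolding eventually_nhds using a by (intro exI[of _ "{a<..}"]) (auto intro!: Fint_eq_integral_diff)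
  show ?thesis using der DERIV_cong_ev[OF refl ev refl] by simp
qed

lemma Fint_strict_antimono: "0 < a \<Longrightarrow> a < b \<Longrightarrow> Fint f b < Fint f a"
  by (rule DERIV_neg_imp_decreasing) (auto intro!: exI has_real_derivative_Fint f_pos)

lemma Fint_antimono: "0 < a \<Longrightarrow> a \<le> b \<Longrightarrow> Fint f b \<le> Fint f a"
  using Fint_strict_antimono by (cases "a = b") (auto intro: less_imp_le)

lemma Fint_inj: "0 < y \<Longrightarrow> 0 < y' \<Longrightarrow> Fint f y = Fint f y' \<Longrightarrow> y = y'"
  using Fint_strict_antimono by (metis less_irrefl linorder_neq_iff)

lemma continuous_on_Fint: "continuous_on {0<..} (Fint f)"
  by (intro continuous_at_imp_continuous_on ballI DERIV_isCont[OF has_real_derivative_Fint]) auto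

lemma Fint_1: "Fint f 1 = 0"
  unfolding Fint_def by simp

lemma Fint_nonneg: "0 < y \<Longrightarrow> y \<le> 1 \<Longrightarrow> Fint f y \<ge> 0"
  using Fint_antimono[of y 1] Fint_1 by simp

lemma f_halving:
  obtains q y0 where "0 < q" "q < 1" "y0 > 0" "\<And>y. 0 < y \<Longrightarrow> y < y0 \<Longrightarrow> f (y / 2) \<le> q / 2 * f y"
proof -
  define p where "p = (1/2) powr \<beta>"
  have "(2::real) powr 1 < 2 powr \<beta>" using beta_gt_1 by (intro powr_less_mono) auto
  hence p: "0 < p" "p < 1/2" unfolding p_def by (auto simp: powr_divide)
  obtain y0 where "y0 > 0"
    and U: "\<And>y. 0 < y \<Longrightarrow> y < y0 \<Longrightarrow> f (y / 2) \<le> (1 + (1/2 - p) / (2 * p)) * (p * f y)"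
    using f_uniform[of "1/2" "1/2" "(1/2 - p) / (2 * p)"] p
    unfolding eventually_at_right_field p_def by (force simp: mult.commute[of _ "1/2"])
  moreover have "(1 + (1/2 - p) / (2 * p)) * (p * f y) = (p + 1/2) / 2 * f y" for y
    using p by (simp add: field_simps)
  ultimately show ?thesis using p by (intro that[of "p + 1/2" y0]) auto
qed

lemma Fint_halving_gap:
  obtains y1 where "y1 > 0" "\<And>y. 0 < y \<Longrightarrow> y \<le> y1 \<Longrightarrow> y / f y / 4 \<le> Fint f (y / 2) - Fint f y"
proof -
  obtain y1 where y1: "y1 > 0" and almost_inc: "\<And>u y. 0 < u \<Longrightarrow> u \<le> y \<Longrightarrow> y \<le> y1 \<Longrightarrow> f u \<le> 2 * f y"
    using f_almost_increasing[of 1] by auto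
  have "y / f y / 4 \<le> Fint f (y / 2) - Fint f y" if y: "0 < y" "y \<le> y1" for y
  proof -
    have "(Fint f has_real_derivative - (1 / f x)) (at x)" if "y / 2 \<le> x" for x
      using that y by (intro has_real_derivative_Fint) simp
    then obtain z where z: "y / 2 < z" "z < y"
      and eq: "Fint f y - Fint f (y / 2) = (y - y / 2) * - (1 / f z)"
      using MVT2[of "y / 2" y "Fint f" "\<lambda>y. - (1 / f y)"] y by auto
    have fz: "f z \<le> 2 * f y" "f z > 0" using almost_inc[of z y] f_pos[of z] z y by auto
    have "y / f y / 4 = (y / 2) / (2 * f y)" by simp
    also have "\<dots> \<le> (y - y / 2) / f z" using fz y by (intro frac_le) auto
    also have "\<dots> = Fint f (y / 2) - Fint f y" using eq by simp
    finally show ?thesis .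
  qed
  thus ?thesis using that y1 by blast
qed

lemma Fint_tendsto_at_top: "filterlim (Fint f) at_top (at_right 0)"
proof -
  obtain q y0 where q: "0 < q" "q < 1" and y0: "y0 > 0"
    and halve: "\<And>y. 0 < y \<Longrightarrow> y < y0 \<Longrightarrow> f (y / 2) \<le> q / 2 * f y"
    using f_halving by blast
  obtain y1 where y1: "y1 > 0" and gap: "\<And>y. 0 < y \<Longrightarrow> y \<le> y1 \<Longrightarrow> y / f y / 4 \<le> Fint f (y / 2) - Fint f y"
    using Fint_halving_gap by blast
  define y2 where "y2 = min (min y1 (y0/2)) 1"
  have y2: "0 < y2" "y2 \<le> y1" "y2 < y0" "y2 \<le> 1" using y1 y0 unfolding y2_def by auto
  \<comment> \<open>Along \<open>a n = y2 / 2^n\<close> the quotient \<open>a n / f (a n)\<close> grows geometrically.\<close>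
  define a where "a n = y2 / 2 ^ n" for n :: nat
  have a: "0 < a n" "a n \<le> y2" "a (Suc n) = a n / 2" for n
    unfolding a_def using y2 by (auto simp: field_simps)
  have ratio: "(1/q) ^ n * (y2 / f y2) \<le> a n / f (a n)" for n
  proof (induction n)
    case 0 thus ?case by (simp add: a_def)
  next
    case (Suc n)
    have "(1/q) ^ Suc n * (y2 / f y2) \<le> (1/q) * (a n / f (a n))"
      using mult_left_mono[OF Suc.IH, of "1/q"] q by simp
    also have "\<dots> = a (Suc n) / ((q/2) * f (a n))" using q by (simp add: a(3))
    also have "\<dots> \<le> a (Suc n) / f (a (Suc n))"
      using f_pos[of "a n"] f_pos[of "a (Suc n)"] a(1)[of n] a(1)[of "Suc n"] q halve[of "a n"] a(2)[of n] y2
      by (intro divide_left_mono) (simp_all add: a(3))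
    finally show ?case .
  qed
  show ?thesis
    unfolding filterlim_at_top
  proof
    fix Z :: real
    obtain n where n: "4 * Z / (y2 / f y2) < (1/q) ^ n"
      using real_arch_pow[of "1/q" "4 * Z / (y2 / f y2)"] q by auto
    have pos: "y2 / f y2 > 0" using y2 f_pos by auto
    from n have "4 * Z < (1/q) ^ n * (y2 / f y2)" unfolding pos_divide_less_eq[OF pos] .
    also have "\<dots> \<le> a n / f (a n)" by (rule ratio)
    finally have "Z < a n / f (a n) / 4" by simp
    also have "\<dots> \<le> Fint f (a (Suc n))"
      using gap[of "a n"] Fint_nonneg[of "a n"] a(1,2)[of n] y2 by (simp add: a(3))
    finally have "Z \<le> Fint f (a (Suc n))" by simp
    moreover have "Fint f (a (Suc n)) \<le> Fint f y" if "0 < y" "y < a (Suc n)" for y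
      using that by (intro Fint_antimono) auto
    ultimately show "\<forall>\<^sub>F y in at_right 0. Z \<le> Fint f y"
      unfolding eventually_at_right_field using a(1)[of "Suc n"]
      by (intro exI[of _ "a (Suc n)"]) (auto intro: order.trans)
  qed
qed

lemma Fint_regularly_varying:
  assumes c: "c > 0"
  shows "((\<lambda>y. Fint f (c * y) / Fint f y) \<longlongrightarrow> c powr (1 - \<beta>)) (at_right 0)"
proof (rule lhopital_right_0_at_top[where f' = "\<lambda>y. - (1 / f (c * y)) * c" and g' = "\<lambda>y. - (1 / f y)"])
  show "LIM y at_right 0. Fint f y :> at_top" by (rule Fint_tendsto_at_top)
  show "\<forall>\<^sub>F y in at_right 0. - (1 / f y) \<noteq> 0"
    unfolding eventually_at_right_field using f_pos by (intro exI[of _ 1]) (auto simp: less_imp_neq[symmetric])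
  show "\<forall>\<^sub>F y in at_right 0. ((\<lambda>y. Fint f (c * y)) has_real_derivative - (1 / f (c * y)) * c) (at y)"
    unfolding eventually_at_right_field
  proof (intro exI[of _ 1] conjI allI impI)
    fix y :: real assume "0 < y"
    hence "c * y > 0" using c by simp
    thus "((\<lambda>y. Fint f (c * y)) has_real_derivative - (1 / f (c * y)) * c) (at y)"
      using DERIV_chain2[OF has_real_derivative_Fint DERIV_cmult_Id[of c y]] by simp
  qed simp
  show "\<forall>\<^sub>F y in at_right 0. (Fint f has_real_derivative - (1 / f y)) (at y)"
    unfolding eventually_at_right_field by (intro exI[of _ 1]) (auto intro!: has_real_derivative_Fint)
  have "((\<lambda>y. c * inverse (f (c * y) / f y)) \<longlongrightarrow> c * inverse (c powr \<beta>)) (at_right 0)"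
    using c by (intro tendsto_intros f_rv) auto
  also have "c * inverse (c powr \<beta>) = c powr (1 - \<beta>)" using c by (simp add: powr_diff field_simps)
  finally have lim: "((\<lambda>y. c * inverse (f (c * y) / f y)) \<longlongrightarrow> c powr (1 - \<beta>)) (at_right 0)" .
  have "\<forall>\<^sub>F y in at_right 0. c * inverse (f (c * y) / f y) = - (1 / f (c * y)) * c / - (1 / f y)"
    unfolding eventually_at_right_field using f_pos c
    by (intro exI[of _ 1]) (auto simp: field_simps less_imp_neq[symmetric])
  with lim show "((\<lambda>y. - (1 / f (c * y)) * c / - (1 / f y)) \<longlongrightarrow> c powr (1 - \<beta>)) (at_right 0)"
    by (rule Lim_transform_eventually)
qed

lemma Finv_correct:
  assumes t: "t \<ge> 0"
  shows "0 < Finv f t \<and> Finv f t \<le> 1 \<and> Fint f (Finv f t) = t"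
proof -
  obtain b where b: "b > 0" "\<And>y. 0 < y \<Longrightarrow> y < b \<Longrightarrow> t \<le> Fint f y"
    using Fint_tendsto_at_top unfolding filterlim_at_top eventually_at_right_field by blast
  define y0 where "y0 = min (b/2) 1"
  have y0: "0 < y0" "y0 < b" "y0 \<le> 1" using b unfolding y0_def by auto
  have "continuous_on {y0..1} (Fint f)" using y0 by (intro continuous_on_subset[OF continuous_on_Fint]) auto
  then obtain y where y: "y0 \<le> y" "y \<le> 1" "Fint f y = t"
    using IVT2'[of "Fint f" 1 t y0] Fint_1 t y0 b by auto
  have "Finv f t = y" unfolding Finv_def by (rule the_equality) (use y y0 Fint_inj in auto)
  thus ?thesis using y y0 by auto
qed

lemma Finv_Fint: "y > 0 \<Longrightarrow> Finv f (Fint f y) = y"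
  unfolding Finv_def by (rule the_equality) (use Fint_inj in auto)

lemma Finv_le_iff: "y > 0 \<Longrightarrow> 0 \<le> t \<Longrightarrow> Finv f t \<le> y \<longleftrightarrow> Fint f y \<le> t"
  using Fint_strict_antimono[of y "Finv f t"] Fint_antimono[of "Finv f t" y] Finv_correct[of t]
  by (cases "Finv f t \<le> y") auto

lemma Finv_antimono: "0 \<le> s' \<Longrightarrow> s' \<le> s \<Longrightarrow> Finv f s \<le> Finv f s'"
  using Finv_le_iff[of "Finv f s'" s] Finv_correct[of s'] by auto

lemma Finv_tendsto_0: "filterlim (Finv f) (at_right 0) at_top"
  unfolding filterlim_at
proof
  show "\<forall>\<^sub>F t in at_top. Finv f t \<in> {0<..} \<and> Finv f t \<noteq> 0"
    using eventually_ge_at_top[of 0] by eventually_elim (use Finv_correct in force)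
  show "(Finv f \<longlongrightarrow> 0) at_top"
  proof (rule tendstoI)
    fix e :: real assume e: "e > 0"
    show "\<forall>\<^sub>F t in at_top. dist (Finv f t) 0 < e"
      using eventually_ge_at_top[of "max 0 (Fint f (e/2))"]
    proof eventually_elim
      case (elim t)
      hence "Finv f t \<le> e/2" "0 < Finv f t" using e Finv_le_iff[of "e/2" t] Finv_correct[of t] by auto
      thus ?case using e by auto
    qed
  qed
qed

lemma Finv_regularly_varying:
  assumes l: "\<mu> > 0"
  shows "((\<lambda>t. Finv f (\<mu> * t) / Finv f t) \<longlongrightarrow> \<mu> powr (-1 / (\<beta> - 1))) at_top"
proof -
  define c where "c = \<mu> powr (-1 / (\<beta> - 1))"
  have c: "c > 0" using l unfolding c_def by simp
  have "(-1 / (\<beta> - 1)) * (1 - \<beta>) = 1" using beta_gt_1 by (simp add: field_simps)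
  hence cl: "c powr (1 - \<beta>) = \<mu>" unfolding c_def powr_powr using l by simp
  have mono: "x powr (1 - \<beta>) < y powr (1 - \<beta>) \<longleftrightarrow> y < x" if "x > 0" "y > 0" for x y
    using that beta_gt_1 powr_less_mono2_neg[of "1 - \<beta>" x y] powr_less_mono2_neg[of "1 - \<beta>" y x]
    by (cases x y rule: linorder_cases) auto
  have Finv: "\<forall>\<^sub>F t in at_top. Fint f (Finv f t) = t \<and> Fint f (Finv f (\<mu> * t)) = \<mu> * t
      \<and> Finv f t > 0 \<and> Finv f (\<mu> * t) > 0 \<and> t > 0"
    using eventually_gt_at_top[of 0] by eventually_elim (use l Finv_correct in auto)
  \<comment> \<open>Invert the regular variation of \<open>Fint f\<close> along \<open>y = Finv f t\<close>.\<close>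
  have FL: "((\<lambda>t. Fint f (a * Finv f t) / Fint f (Finv f t)) \<longlongrightarrow> a powr (1 - \<beta>)) at_top" if "a > 0" for a
    by (rule filterlim_compose[OF Fint_regularly_varying[OF that] Finv_tendsto_0])
  show ?thesis unfolding c_def[symmetric]
  proof (rule order_tendstoI)
    fix a assume a: "a < c"
    show "\<forall>\<^sub>F t in at_top. a < Finv f (\<mu> * t) / Finv f t"
    proof (cases "a > 0")
      case True
      have "\<forall>\<^sub>F t in at_top. \<mu> < Fint f (a * Finv f t) / Fint f (Finv f t)"
        using a True c cl mono[of c a] by (intro order_tendstoD(1)[OF FL[OF True]]) auto
      thus ?thesis using Finv
      proof eventually_elim
        case (elim t)
        hence "Fint f (Finv f (\<mu> * t)) < Fint f (a * Finv f t)" by (simp add: pos_less_divide_eq)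
        hence "a * Finv f t < Finv f (\<mu> * t)"
          using Fint_antimono[of "Finv f (\<mu> * t)" "a * Finv f t"] elim by (meson not_le)
        thus ?case using elim by (simp add: pos_less_divide_eq)
      qed
    next
      case False
      show ?thesis using Finv
        by eventually_elim (use False in \<open>auto intro!: le_less_trans[OF _ divide_pos_pos]\<close>)
    qed
  next
    fix b assume b: "c < b"
    hence b0: "b > 0" using c by simp
    have "\<forall>\<^sub>F t in at_top. Fint f (b * Finv f t) / Fint f (Finv f t) < \<mu>"
      using b b0 c cl mono[of b c] by (intro order_tendstoD(2)[OF FL[OF b0]]) auto
    thus "\<forall>\<^sub>F t in at_top. Finv f (\<mu> * t) / Finv f t < b" using Finv
    proof eventually_elim
      case (elim t)
      hence "Fint f (b * Finv f t) < Fint f (Finv f (\<mu> * t))" by (simp add: divide_less_eq)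
      hence "Finv f (\<mu> * t) < b * Finv f t"
        using Fint_antimono[of "b * Finv f t" "Finv f (\<mu> * t)"] elim b0 by (meson not_le mult_pos_pos)
      thus ?case using elim by (simp add: divide_less_eq)
    qed
  qed
qed

lemma f_Finv_regularly_varying:
  assumes l: "\<mu> > 0"
  shows "((\<lambda>t. f (Finv f (\<mu> * t)) / f (Finv f t)) \<longlongrightarrow> \<mu> powr (- \<beta> / (\<beta> - 1))) at_top"
proof -
  define c where "c = \<mu> powr (-1 / (\<beta> - 1))"
  have c: "c > 0" using l unfolding c_def by simp
  define s where "s t = Finv f (\<mu> * t) / Finv f t" for t
  have s_lim: "(s \<longlongrightarrow> c) at_top" unfolding s_def c_def by (rule Finv_regularly_varying[OF l])
  have pos: "\<forall>\<^sub>F t in at_top. Finv f t > 0 \<and> Finv f (\<mu> * t) > 0"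
    using eventually_ge_at_top[of 0] by eventually_elim (use l Finv_correct in auto)
  \<comment> \<open>Uniform convergence lets the scale factor \<open>s t\<close> vary with \<open>t\<close>.\<close>
  have R: "((\<lambda>t. f (s t * Finv f t) / (s t powr \<beta> * f (Finv f t))) \<longlongrightarrow> 1) at_top"
  proof (rule tendstoI)
    fix e :: real assume e: "e > 0"
    have "\<forall>\<^sub>F y in at_right 0. \<forall>s\<in>{c/2..2*c}.
        (1 - e/2) * (s powr \<beta> * f y) \<le> f (s * y) \<and> f (s * y) \<le> (1 + e/2) * (s powr \<beta> * f y)"
      using c e by (intro f_uniform) auto
    hence U: "\<forall>\<^sub>F t in at_top. \<forall>s\<in>{c/2..2*c}. (1 - e/2) * (s powr \<beta> * f (Finv f t)) \<le> f (s * Finv f t)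
        \<and> f (s * Finv f t) \<le> (1 + e/2) * (s powr \<beta> * f (Finv f t))"
      by (rule eventually_compose_filterlim[OF _ Finv_tendsto_0])
    have "\<forall>\<^sub>F t in at_top. c/2 < s t" using s_lim c by (intro order_tendstoD(1)) auto
    moreover have "\<forall>\<^sub>F t in at_top. s t < 2*c" using s_lim c by (intro order_tendstoD(2)) auto
    ultimately show "\<forall>\<^sub>F t in at_top. dist (f (s t * Finv f t) / (s t powr \<beta> * f (Finv f t))) 1 < e"
      using U pos
    proof eventually_elim
      case (elim t)
      have P: "s t powr \<beta> * f (Finv f t) > 0" using elim c f_pos by auto
      have "f (s t * Finv f t) / (s t powr \<beta> * f (Finv f t)) \<le> 1 + e/2"
        "1 - e/2 \<le> f (s t * Finv f t) / (s t powr \<beta> * f (Finv f t))"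
        using elim P by (auto simp: divide_le_eq le_divide_eq)
      thus ?case using e by (auto simp: dist_real_def abs_le_iff)
    qed
  qed
  have "((\<lambda>t. f (s t * Finv f t) / (s t powr \<beta> * f (Finv f t)) * s t powr \<beta>) \<longlongrightarrow> 1 * c powr \<beta>) at_top"
    using c by (intro tendsto_intros R s_lim) auto
  also have "1 * c powr \<beta> = \<mu> powr (- \<beta> / (\<beta> - 1))" unfolding c_def powr_powr by (simp add: field_simps)
  finally have lim: "((\<lambda>t. f (s t * Finv f t) / (s t powr \<beta> * f (Finv f t)) * s t powr \<beta>)
      \<longlongrightarrow> \<mu> powr (- \<beta> / (\<beta> - 1))) at_top" .
  have "\<forall>\<^sub>F t in at_top. f (s t * Finv f t) / (s t powr \<beta> * f (Finv f t)) * s t powr \<beta>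
      = f (Finv f (\<mu> * t)) / f (Finv f t)"
    using pos by eventually_elim (simp add: s_def)
  with lim show ?thesis by (rule Lim_transform_eventually)
qed

lemma f_Finv_almost_decreasing:
  assumes d: "\<delta> > 0"
  shows "\<exists>S\<ge>0. \<forall>s s'. S \<le> s' \<and> s' \<le> s \<longrightarrow> f (Finv f s) \<le> (1 + \<delta>) * f (Finv f s')"
proof -
  obtain y0 where y0: "y0 > 0" and A: "\<forall>y y'. 0 < y \<and> y \<le> y' \<and> y' \<le> y0 \<longrightarrow> f y \<le> (1 + \<delta>) * f y'"
    using f_almost_increasing[OF d] by blast
  show ?thesis
  proof (intro exI[of _ "max 0 (Fint f y0)"] conjI allI impI)
    fix s s' assume h: "max 0 (Fint f y0) \<le> s' \<and> s' \<le> s"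
    have "Finv f s' \<le> y0" using h y0 Finv_le_iff by auto
    moreover have "Finv f s \<le> Finv f s'" using h by (intro Finv_antimono) auto
    moreover have "Finv f s > 0" using h Finv_correct[of s] by auto
    ultimately show "f (Finv f s) \<le> (1 + \<delta>) * f (Finv f s')" using A by blast
  qed simp
qed

lemma scaled_ratio_tendsto:
  assumes lim: "((\<lambda>t. g t / f (Finv f t)) \<longlongrightarrow> l) at_top" and a: "a > 0"
  shows "((\<lambda>t. g t / f (Finv f (a * t))) \<longlongrightarrow> l / a powr (- \<beta> / (\<beta> - 1))) at_top"
proof -
  have "((\<lambda>t. (g t / f (Finv f t)) / (f (Finv f (a * t)) / f (Finv f t))) \<longlongrightarrow> l / a powr (- \<beta> / (\<beta> - 1))) at_top"
    using a by (intro tendsto_intros lim f_Finv_regularly_varying) auto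
  moreover have "\<forall>\<^sub>F t in at_top. (g t / f (Finv f t)) / (f (Finv f (a * t)) / f (Finv f t))
      = g t / f (Finv f (a * t))"
    using eventually_ge_at_top[of 0]
  proof eventually_elim
    case (elim t)
    have "f (Finv f t) > 0" using Finv_correct[OF elim] f_pos by auto
    thus ?case by simp
  qed
  ultimately show ?thesis by (rule Lim_transform_eventually)
qed

lemma scaled_ratio_unbounded:
  assumes unb: "\<And>M. \<forall>\<^sub>F t in at_top. M < g t / f (Finv f t)" and a: "a > 0"
  shows "\<forall>\<^sub>F t in at_top. M < g t / f (Finv f (a * t))"
proof -
  define P where "P = a powr (- \<beta> / (\<beta> - 1))"
  have P: "P > 0" using a by (simp add: P_def)
  have "\<forall>\<^sub>F t in at_top. f (Finv f (a * t)) / f (Finv f t) < 2 * P"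
    using P a unfolding P_def by (intro order_tendstoD(2)[OF f_Finv_regularly_varying]) auto
  moreover have "\<forall>\<^sub>F t in at_top. f (Finv f t) > 0 \<and> f (Finv f (a * t)) > 0"
    using eventually_ge_at_top[of 0] by eventually_elim (use a Finv_correct f_pos in auto)
  ultimately show ?thesis using unb[of "2 * P * \<bar>M\<bar>"]
  proof eventually_elim
    case (elim t)
    hence *: "2 * P * \<bar>M\<bar> * f (Finv f t) < g t" "f (Finv f (a * t)) < 2 * P * f (Finv f t)"
      by (simp_all add: less_divide_eq divide_less_eq)
    have "\<bar>M\<bar> * f (Finv f (a * t)) \<le> \<bar>M\<bar> * (2 * P * f (Finv f t))"
      using *(2) by (intro mult_left_mono) simp_all
    also have "\<dots> < g t" using *(1) by (simp add: ac_simps)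
    finally have "\<bar>M\<bar> < g t / f (Finv f (a * t))" using elim by (simp add: less_divide_eq)
    thus ?case by linarith
  qed
qed

end

section \<open>The equation for \<open>u = F \<circ> x\<close>\<close>

lemma short_excursion:
  fixes u :: "real \<Rightarrow> real"
  assumes k: "\<kappa> > 0" and \<eta>: "\<eta> > 0" and S: "S \<ge> 0"
    and bound: "\<And>t. T \<le> t \<Longrightarrow> S \<le> u t \<and> u t < \<kappa> * \<eta> / 2 * t"
    and c: "T \<le> c" "c \<le> t1" and incr: "\<kappa> * (t1 - c) \<le> \<bar>u t1 - u c\<bar>"
  shows "(1 - \<eta>) * t1 < c"
proof -
  have "\<kappa> * \<eta> / 2 * c \<le> \<kappa> * \<eta> / 2 * t1" using c k \<eta> by (intro mult_left_mono) auto
  hence "u c < \<kappa> * \<eta> / 2 * t1" using bound[of c] c by linarith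
  hence "\<bar>u t1 - u c\<bar> < \<kappa> * \<eta> / 2 * t1"
    using bound[of c] bound[of t1] c S unfolding abs_less_iff by linarith
  hence "\<kappa> * (t1 - c) < \<kappa> * (\<eta> * t1)" using incr bound[of t1] c k \<eta> S by (auto simp: field_simps)
  hence "t1 - c < \<eta> * t1" using k by (simp only: mult_less_cancel_left_pos)
  thus ?thesis by (simp add: algebra_simps)
qed

locale transformed_equation = rv_zero f \<beta> for f \<beta> +
  fixes g u :: "real \<Rightarrow> real" and \<theta> :: real
  assumes g_cont: "continuous_on {0<..} g" and g_pos: "\<And>t. t > 0 \<Longrightarrow> g t > 0"
    and g_rv: "\<And>c. c > 0 \<Longrightarrow> ((\<lambda>t. g (c * t) / g t) \<longlongrightarrow> c powr (- \<theta>)) at_top"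
    and u_deriv: "\<And>t. t > 0 \<Longrightarrow> (u has_real_derivative 1 - g t / f (Finv f (u t))) (at t)"
    and f_Finv_u_pos: "\<And>t. t > 0 \<Longrightarrow> f (Finv f (u t)) > 0"
    and u_tendsto: "filterlim u at_top at_top"
    and continuous_f_Finv_u: "continuous_on {0<..} (\<lambda>t. f (Finv f (u t)))"
begin

lemma eventually_u_ge: "\<forall>\<^sub>F t in at_top. S \<le> u t"
  using u_tendsto unfolding filterlim_at_top by blast

lemma eventually_linear_lt_u:
  assumes a: "a > 0" and c: "c < 1 - a"
    and bound: "\<forall>\<^sub>F t in at_top. g t / f (Finv f (a * t)) \<le> c"
  shows "\<forall>\<^sub>F t in at_top. a * t < u t"
proof -
  obtain \<delta> where d: "\<delta> > 0" "(1 + \<delta>) * c < 1 - a" using exists_factor_less[OF c] by blast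
  obtain S where S: "S \<ge> 0" "\<And>s s'. S \<le> s' \<Longrightarrow> s' \<le> s \<Longrightarrow> f (Finv f s) \<le> (1 + \<delta>) * f (Finv f s')"
    using f_Finv_almost_decreasing[OF d(1)] by auto
  have "\<forall>\<^sub>F t in at_top. S \<le> u t \<and> g t / f (Finv f (a * t)) \<le> c \<and> max 1 (S / a) \<le> t"
    using eventually_u_ge bound eventually_ge_at_top by (intro eventually_conj)
  then obtain T where T: "\<And>t. t \<ge> T \<Longrightarrow> S \<le> u t \<and> g t / f (Finv f (a * t)) \<le> c \<and> max 1 (S / a) \<le> t"
    unfolding eventually_at_top_linorder by blast
  \<comment> \<open>While \<open>u t \<le> a t\<close>, almost monotonicity gives \<open>u' \<ge> a + \<kappa>\<close>.\<close>
  have "\<forall>\<^sub>F t in at_top. a * t - u t < 0"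
  proof (rule barrier_eventually_neg[where T = T and \<kappa> = "1 - a - (1 + \<delta>) * c"])
    fix t assume t: "t > T"
    hence "t > 0" using T[of t] by auto
    thus "((\<lambda>t. a * t - u t) has_real_derivative a - (1 - g t / f (Finv f (u t)))) (at t)"
      by (auto intro!: derivative_eq_intros u_deriv)
  next
    fix t assume t: "t > T" and w: "0 \<le> a * t - u t"
    have Tt: "S \<le> u t" "g t / f (Finv f (a * t)) \<le> c" "1 \<le> t" "S \<le> a * t"
      using T[of t] t a by (auto simp: field_simps)
    have pos: "f (Finv f (u t)) > 0" "f (Finv f (a * t)) > 0" "g t > 0"
      using f_Finv_u_pos g_pos Finv_correct f_pos Tt a by auto
    have "g t / f (Finv f (u t)) \<le> g t / (f (Finv f (a * t)) / (1 + \<delta>))"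
      using S(2)[of "u t" "a * t"] Tt w pos d by (intro divide_left_mono) (auto simp: field_simps)
    also have "\<dots> = (1 + \<delta>) * (g t / f (Finv f (a * t)))" by simp
    also have "\<dots> \<le> (1 + \<delta>) * c" using Tt d by (intro mult_left_mono) auto
    finally show "a - (1 - g t / f (Finv f (u t))) \<le> - (1 - a - (1 + \<delta>) * c)" by simp
  qed (use d in auto)
  thus ?thesis by eventually_elim simp
qed

lemma eventually_u_lt_linear:
  assumes b: "b > 0" and c: "1 - b < c"
    and bound: "\<forall>\<^sub>F t in at_top. c \<le> g t / f (Finv f (b * t))"
  shows "\<forall>\<^sub>F t in at_top. u t < b * t"
proof -
  obtain \<delta> where d: "\<delta> > 0" "(1 + \<delta>) * (1 - b) < c" using exists_factor_less[OF c] by blast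
  obtain S where S: "S \<ge> 0" "\<And>s s'. S \<le> s' \<Longrightarrow> s' \<le> s \<Longrightarrow> f (Finv f s) \<le> (1 + \<delta>) * f (Finv f s')"
    using f_Finv_almost_decreasing[OF d(1)] by auto
  have "\<forall>\<^sub>F t in at_top. c \<le> g t / f (Finv f (b * t)) \<and> max 1 (S / b) \<le> t"
    using bound eventually_ge_at_top by (intro eventually_conj)
  then obtain T where T: "\<And>t. t \<ge> T \<Longrightarrow> c \<le> g t / f (Finv f (b * t)) \<and> max 1 (S / b) \<le> t"
    unfolding eventually_at_top_linorder by blast
  \<comment> \<open>While \<open>u t \<ge> b t\<close>, almost monotonicity gives \<open>u' \<le> b - \<kappa>\<close>.\<close>
  have "\<forall>\<^sub>F t in at_top. u t - b * t < 0"
  proof (rule barrier_eventually_neg[where T = T and \<kappa> = "c / (1 + \<delta>) - (1 - b)"])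
    fix t assume t: "t > T"
    hence "t > 0" using T[of t] by auto
    thus "((\<lambda>t. u t - b * t) has_real_derivative (1 - g t / f (Finv f (u t))) - b) (at t)"
      by (auto intro!: derivative_eq_intros u_deriv)
  next
    fix t assume t: "t > T" and w: "0 \<le> u t - b * t"
    have Tt: "c \<le> g t / f (Finv f (b * t))" "1 \<le> t" "S \<le> b * t"
      using T[of t] t b by (auto simp: field_simps)
    have pos: "f (Finv f (u t)) > 0" "f (Finv f (b * t)) > 0" "g t > 0"
      using f_Finv_u_pos g_pos Finv_correct f_pos Tt b by auto
    have "c / (1 + \<delta>) \<le> (g t / f (Finv f (b * t))) / (1 + \<delta>)"
      using Tt d by (intro divide_right_mono) auto
    also have "\<dots> = g t / ((1 + \<delta>) * f (Finv f (b * t)))" by simp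
    also have "\<dots> \<le> g t / f (Finv f (u t))"
      using S(2)[of "b * t" "u t"] Tt w pos d by (intro divide_left_mono) auto
    finally show "(1 - g t / f (Finv f (u t))) - b \<le> - (c / (1 + \<delta>) - (1 - b))" by simp
  qed (use d in \<open>auto simp: field_simps\<close>)
  thus ?thesis by eventually_elim simp
qed

lemma u_over_t_tendsto:
  assumes lim: "((\<lambda>t. g t / f (Finv f t)) \<longlongrightarrow> l) at_top"
    and r: "0 < r" "r \<le> 1" and l: "(1 - r) * r powr (- \<beta> / (\<beta> - 1)) = l"
  shows "((\<lambda>t. u t / t) \<longlongrightarrow> r) at_top"
proof -
  define \<gamma> where "\<gamma> = - \<beta> / (\<beta> - 1)"
  have P_less: "y powr \<gamma> / x powr \<gamma> < 1" "1 < x powr \<gamma> / y powr \<gamma>" if "0 < x" "x < y" for x y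
    using beta_gt_1 that powr_less_mono2_neg[of \<gamma> x y]
    by (simp_all add: \<gamma>_def divide_neg_pos divide_less_eq less_divide_eq)
  \<comment> \<open>The limit \<open>(1 - r) (r/a) powr \<gamma>\<close> is below \<open>1 - a\<close> for \<open>a < r\<close> and above it for \<open>a > r\<close>.\<close>
  have ratio: "((\<lambda>t. g t / f (Finv f (a * t))) \<longlongrightarrow> (1 - r) * (r powr \<gamma> / a powr \<gamma>)) at_top"
    if "a > 0" for a
    using scaled_ratio_tendsto[OF lim that] unfolding l[symmetric] \<gamma>_def by simp
  show ?thesis
  proof (rule order_tendstoI)
    fix a assume a: "a < r"
    show "\<forall>\<^sub>F t in at_top. a < u t / t"
    proof (cases "a > 0")
      case True
      have "(1 - r) * (r powr \<gamma> / a powr \<gamma>) \<le> 1 - r"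
        using r P_less(1)[OF True a] by (intro mult_right_le_one_le) auto
      hence "(1 - r) * (r powr \<gamma> / a powr \<gamma>) < 1 - a" using a by linarith
      then obtain c where "(1 - r) * (r powr \<gamma> / a powr \<gamma>) < c" "c < 1 - a" using dense by blast
      hence "\<forall>\<^sub>F t in at_top. a * t < u t"
        by (intro eventually_linear_lt_u[OF True] eventually_mono[OF order_tendstoD(2)[OF ratio[OF True]]])
          auto
      thus ?thesis using eventually_gt_at_top[of 0] by eventually_elim (simp add: less_divide_eq)
    next
      case False
      show ?thesis using eventually_u_ge[of 1] eventually_gt_at_top[of 0]
      proof eventually_elim
        case (elim t)
        hence "0 < u t / t" by simp
        thus ?case using False by linarith
      qed
    qed
  next
    fix b assume b: "r < b"
    hence b0: "b > 0" using r by simp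
    have "1 - r \<le> (1 - r) * (r powr \<gamma> / b powr \<gamma>)"
      using r P_less(2)[OF r(1) b] mult_left_mono[of 1 "r powr \<gamma> / b powr \<gamma>" "1 - r"] by simp
    hence "1 - b < (1 - r) * (r powr \<gamma> / b powr \<gamma>)" using b by linarith
    then obtain c where "1 - b < c" "c < (1 - r) * (r powr \<gamma> / b powr \<gamma>)" using dense by blast
    hence "\<forall>\<^sub>F t in at_top. u t < b * t"
      by (intro eventually_u_lt_linear[OF b0] eventually_mono[OF order_tendstoD(1)[OF ratio[OF b0]]]) auto
    thus "\<forall>\<^sub>F t in at_top. u t / t < b" using eventually_gt_at_top[of 0]
      by eventually_elim (simp add: divide_less_eq)
  qed
qed

lemma u_sublinear:
  assumes unb: "\<And>M. \<forall>\<^sub>F t in at_top. M < g t / f (Finv f t)" and d: "\<delta> > 0"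
  shows "\<forall>\<^sub>F t in at_top. u t < \<delta> * t"
  using d scaled_ratio_unbounded[OF unb d, of 1]
  by (intro eventually_u_lt_linear[OF d, of 1]) (auto elim: eventually_mono)

lemma u_mean_value:
  assumes "0 < c" "c < t"
  shows "\<exists>z. c < z \<and> z < t \<and> u t - u c = (t - c) * (1 - g z / f (Finv f (u z)))"
  using MVT2[OF assms(2), of u "\<lambda>z. 1 - g z / f (Finv f (u z))"] u_deriv assms by force

lemma continuous_on_f_Finv_u_minus_g:
  "0 < a \<Longrightarrow> continuous_on {a..b} (\<lambda>t. f (Finv f (u t)) - k * g t)"
  by (intro continuous_intros continuous_on_subset[OF continuous_f_Finv_u]
      continuous_on_subset[OF g_cont]) auto

lemma u_increment_ge:
  assumes c: "0 < c" "c < t1" and e: "e > 0"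
    and above: "\<And>s. c < s \<Longrightarrow> s < t1 \<Longrightarrow> (1 + e) * g s < f (Finv f (u s))"
  shows "e / (1 + e) * (t1 - c) \<le> u t1 - u c"
proof -
  obtain z where z: "c < z" "z < t1" "u t1 - u c = (t1 - c) * (1 - g z / f (Finv f (u z)))"
    using u_mean_value[OF c] by auto
  have "g z / f (Finv f (u z)) < 1 / (1 + e)"
    using above[OF z(1,2)] z c f_Finv_u_pos[of z] e by (simp add: field_simps)
  moreover have "e / (1 + e) = 1 - 1 / (1 + e)" using e by (simp add: field_simps)
  ultimately have "e / (1 + e) \<le> 1 - g z / f (Finv f (u z))" by linarith
  hence "e / (1 + e) * (t1 - c) \<le> (1 - g z / f (Finv f (u z))) * (t1 - c)"
    using z by (intro mult_right_mono) auto
  thus ?thesis using z(3) by (simp only: mult.commute)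
qed

lemma u_increment_le:
  assumes c: "0 < c" "c < t1" and e: "0 < e" "e < 1"
    and below: "\<And>s. c < s \<Longrightarrow> s < t1 \<Longrightarrow> f (Finv f (u s)) < (1 - e) * g s"
  shows "e / (1 + e) * (t1 - c) \<le> u c - u t1"
proof -
  obtain z where z: "c < z" "z < t1" "u t1 - u c = (t1 - c) * (1 - g z / f (Finv f (u z)))"
    using u_mean_value[OF c] by auto
  have "1 / (1 - e) < g z / f (Finv f (u z))"
    using below[OF z(1,2)] z c f_Finv_u_pos[of z] e by (simp add: field_simps)
  moreover have "1 + e \<le> 1 / (1 - e)" "e / (1 + e) \<le> e" using e by (simp_all add: field_simps)
  ultimately have "1 - g z / f (Finv f (u z)) \<le> - (e / (1 + e))" by linarith
  hence "(1 - g z / f (Finv f (u z))) * (t1 - c) \<le> - (e / (1 + e)) * (t1 - c)"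
    using z by (intro mult_right_mono) auto
  thus ?thesis using z(3) by (simp add: mult.commute)
qed

lemma excursion_setup:
  assumes unb: "\<And>M. \<forall>\<^sub>F t in at_top. M < g t / f (Finv f t)" and e: "e > 0"
  obtains \<eta> T S where "0 < \<eta>" "\<eta> < 1" "T > 0" "S \<ge> 0"
    "\<And>t. T \<le> t \<Longrightarrow> S \<le> u t \<and> u t < e / (1 + e) * \<eta> / 2 * t"
    "\<And>t s. T \<le> t \<Longrightarrow> s \<in> {1-\<eta>..1} \<Longrightarrow> (1 - e) * g t \<le> g (s * t) \<and> g (s * t) \<le> (1 + e) * g t"
    "\<And>s s'. S \<le> s' \<Longrightarrow> s' \<le> s \<Longrightarrow> f (Finv f s) \<le> (1 + e) * f (Finv f s')"
proof -
  obtain \<eta> where \<eta>: "0 < \<eta>" "\<eta> < 1" and G: "\<forall>\<^sub>F t in at_top. \<forall>s\<in>{1-\<eta>..1}.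
      (1 - e) * g t \<le> g (s * t) \<and> g (s * t) \<le> (1 + e) * g t"
    using regularly_varying_near_one[OF g_cont g_pos g_rv e] by blast
  obtain S where S: "S \<ge> 0" "\<And>s s'. S \<le> s' \<Longrightarrow> s' \<le> s \<Longrightarrow> f (Finv f s) \<le> (1 + e) * f (Finv f s')"
    using f_Finv_almost_decreasing[OF e] by auto
  have "e / (1 + e) * \<eta> / 2 > 0" using e \<eta> by simp
  hence "\<forall>\<^sub>F t in at_top. (S \<le> u t \<and> u t < e / (1 + e) * \<eta> / 2 * t)
      \<and> (\<forall>s\<in>{1-\<eta>..1}. (1 - e) * g t \<le> g (s * t) \<and> g (s * t) \<le> (1 + e) * g t) \<and> 1 \<le> t"
    using eventually_u_ge G eventually_ge_at_top
    by (intro eventually_conj u_sublinear[OF unb]) (auto simp: mult.assoc)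
  then obtain T where "\<And>t. T \<le> t \<Longrightarrow> (S \<le> u t \<and> u t < e / (1 + e) * \<eta> / 2 * t)
      \<and> (\<forall>s\<in>{1-\<eta>..1}. (1 - e) * g t \<le> g (s * t) \<and> g (s * t) \<le> (1 + e) * g t) \<and> 1 \<le> t"
    unfolding eventually_at_top_linorder by blast
  thus ?thesis using that[OF \<eta> _ S(1) _ _ S(2), of "max T 1"] by force
qed

lemma eventually_f_Finv_u_le:
  assumes unb: "\<And>M. \<forall>\<^sub>F t in at_top. M < g t / f (Finv f t)" and e: "e > 0"
  shows "\<forall>\<^sub>F t in at_top. f (Finv f (u t)) \<le> (1 + e) ^ 3 * g t"
proof -
  obtain \<eta> T S where \<eta>: "0 < \<eta>" "\<eta> < 1" and T: "T > 0" and S: "S \<ge> 0"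
    and U: "\<And>t. T \<le> t \<Longrightarrow> S \<le> u t \<and> u t < e / (1 + e) * \<eta> / 2 * t"
    and G: "\<And>t s. T \<le> t \<Longrightarrow> s \<in> {1-\<eta>..1} \<Longrightarrow> g (s * t) \<le> (1 + e) * g t"
    and AD: "\<And>s s'. S \<le> s' \<Longrightarrow> s' \<le> s \<Longrightarrow> f (Finv f s) \<le> (1 + e) * f (Finv f s')"
    using excursion_setup[OF unb e] by metis
  have "f (Finv f (u t1)) \<le> (1 + e) ^ 3 * g t1" if t1: "T / (1 - \<eta>) \<le> t1" for t1
  proof -
    have "0 < T / (1 - \<eta>)" using T \<eta> by simp
    hence t1_pos: "0 < t1" using t1 by linarith
    have "(1 - \<eta>) * t1 < t1" "T \<le> (1 - \<eta>) * t1" using t1 t1_pos \<eta> by (simp_all add: field_simps)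
    hence Tt1: "T \<le> (1 - \<eta>) * t1" "T < t1" by linarith+
    have gt1: "(1 + e) * g t1 \<le> (1 + e) ^ 3 * g t1"
      using e g_pos[of t1] Tt1 T mult_mono[of 1 "1 + e" 1 "1 + e"]
      by (intro mult_right_mono) (auto simp: power3_eq_cube)
    show ?thesis
    proof (cases "f (Finv f (u t1)) - (1 + e) * g t1 \<le> 0")
      case True thus ?thesis using gt1 by linarith
    next
      case False
      \<comment> \<open>Look back to the last time \<open>c\<close> at which \<open>f (Finv f (u c)) \<le> (1 + e) g c\<close>.\<close>
      then obtain c where c: "T \<le> c" "c < t1" "c = T \<or> f (Finv f (u c)) - (1 + e) * g c \<le> 0"
        "\<And>s. c < s \<Longrightarrow> s \<le> t1 \<Longrightarrow> f (Finv f (u s)) - (1 + e) * g s > 0"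
        using exists_last_nonpos_or_start[OF Tt1(2) continuous_on_f_Finv_u_minus_g[OF T, of t1 "1 + e"]] by auto
      have incr: "e / (1 + e) * (t1 - c) \<le> u t1 - u c"
        using c T e by (intro u_increment_ge) auto
      have c_near: "(1 - \<eta>) * t1 < c"
        using e \<eta>(1) c(1,2) order.trans[OF incr abs_ge_self]
        by (intro short_excursion[where T = T and u = u and \<kappa> = "e / (1 + e)", OF _ _ S U]) auto
      hence "c / t1 \<in> {1-\<eta>..1}" using c(2) t1_pos by (simp add: pos_le_divide_eq pos_divide_le_eq)
      hence gc: "g c \<le> (1 + e) * g t1" using G[of t1 "c / t1"] Tt1 t1_pos by simp
      have "0 \<le> e / (1 + e) * (t1 - c)" using e c(2) by simp
      hence "u c \<le> u t1" using incr by linarith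
      hence "f (Finv f (u t1)) \<le> (1 + e) * f (Finv f (u c))" using AD U[of c] c(1) by blast
      also have "\<dots> \<le> (1 + e) * ((1 + e) * g c)"
        using c(3) c_near Tt1 e by (intro mult_left_mono) auto
      also have "\<dots> \<le> (1 + e) * ((1 + e) * ((1 + e) * g t1))"
        using gc e by (intro mult_left_mono) auto
      finally show ?thesis by (simp add: power3_eq_cube mult.assoc)
    qed
  qed
  thus ?thesis unfolding eventually_at_top_linorder by blast
qed

lemma eventually_f_Finv_u_ge:
  assumes unb: "\<And>M. \<forall>\<^sub>F t in at_top. M < g t / f (Finv f t)" and e: "0 < e" "e < 1"
  shows "\<forall>\<^sub>F t in at_top. (1 - e) ^ 3 * g t \<le> f (Finv f (u t))"
proof -
  obtain \<eta> T S where \<eta>: "0 < \<eta>" "\<eta> < 1" and T: "T > 0" and S: "S \<ge> 0"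
    and U: "\<And>t. T \<le> t \<Longrightarrow> S \<le> u t \<and> u t < e / (1 + e) * \<eta> / 2 * t"
    and G: "\<And>t s. T \<le> t \<Longrightarrow> s \<in> {1-\<eta>..1} \<Longrightarrow> (1 - e) * g t \<le> g (s * t)"
    and AD: "\<And>s s'. S \<le> s' \<Longrightarrow> s' \<le> s \<Longrightarrow> f (Finv f s) \<le> (1 + e) * f (Finv f s')"
    using excursion_setup[OF unb e(1)] by metis
  have "(1 - e) ^ 3 * g t1 \<le> f (Finv f (u t1))" if t1: "T / (1 - \<eta>) \<le> t1" for t1
  proof -
    have "0 < T / (1 - \<eta>)" using T \<eta> by simp
    hence t1_pos: "0 < t1" using t1 by linarith
    have "(1 - \<eta>) * t1 < t1" "T \<le> (1 - \<eta>) * t1" using t1 t1_pos \<eta> by (simp_all add: field_simps)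
    hence Tt1: "T \<le> (1 - \<eta>) * t1" "T < t1" by linarith+
    have gt1: "(1 - e) ^ 3 * g t1 \<le> (1 - e) * g t1"
      using e g_pos[of t1] Tt1 T mult_mono[of "1 - e" 1 "1 - e" 1]
      by (intro mult_right_mono) (auto simp: power3_eq_cube)
    show ?thesis
    proof (cases "- (f (Finv f (u t1)) - (1 - e) * g t1) \<le> 0")
      case True thus ?thesis using gt1 by linarith
    next
      case False
      \<comment> \<open>Look back to the last time \<open>c\<close> at which \<open>(1 - e) g c \<le> f (Finv f (u c))\<close>.\<close>
      then obtain c where c: "T \<le> c" "c < t1" "c = T \<or> - (f (Finv f (u c)) - (1 - e) * g c) \<le> 0"
        "\<And>s. c < s \<Longrightarrow> s \<le> t1 \<Longrightarrow> - (f (Finv f (u s)) - (1 - e) * g s) > 0"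
        using exists_last_nonpos_or_start[OF Tt1(2)
            continuous_on_minus[OF continuous_on_f_Finv_u_minus_g[OF T, of t1 "1 - e"]]] by auto
      have decr: "e / (1 + e) * (t1 - c) \<le> u c - u t1"
        using c T e by (intro u_increment_le) auto
      have c_near: "(1 - \<eta>) * t1 < c"
        using e \<eta>(1) c(1,2) order.trans[OF decr abs_ge_self[of "u c - u t1"]]
        by (intro short_excursion[where T = T and u = u and \<kappa> = "e / (1 + e)", OF _ _ S U])
          (auto simp: abs_minus_commute)
      hence "c / t1 \<in> {1-\<eta>..1}" using c(2) t1_pos by (simp add: pos_le_divide_eq pos_divide_le_eq)
      hence gc: "(1 - e) * g t1 \<le> g c" using G[of t1 "c / t1"] Tt1 t1_pos by simp
      have "0 \<le> e / (1 + e) * (t1 - c)" using e c(2) by simp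
      hence "u t1 \<le> u c" using decr by linarith
      hence AD_c: "f (Finv f (u c)) \<le> (1 + e) * f (Finv f (u t1))" using AD U[of t1] Tt1 by auto
      have "(1 - e) ^ 3 * g t1 = (1 - e) * ((1 - e) * ((1 - e) * g t1))" by (simp add: power3_eq_cube)
      also have "\<dots> \<le> (1 - e) * ((1 - e) * g c)" using gc e by (intro mult_left_mono) auto
      also have "\<dots> \<le> (1 - e) * f (Finv f (u c))"
        using c(3) c_near Tt1 e by (intro mult_left_mono) auto
      also have "\<dots> \<le> (1 - e) * ((1 + e) * f (Finv f (u t1)))"
        using AD_c e by (intro mult_left_mono) auto
      also have "\<dots> \<le> f (Finv f (u t1))"
        using e f_Finv_u_pos[of t1] t1_pos mult_right_mono[of "(1 - e) * (1 + e)" 1 "f (Finv f (u t1))"]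
        by (simp add: algebra_simps)
      finally show ?thesis .
    qed
  qed
  thus ?thesis unfolding eventually_at_top_linorder by blast
qed

lemma f_Finv_u_over_g_tendsto:
  assumes unb: "\<And>M. \<forall>\<^sub>F t in at_top. M < g t / f (Finv f t)"
  shows "((\<lambda>t. f (Finv f (u t)) / g t) \<longlongrightarrow> 1) at_top"
proof (rule order_tendstoI)
  have small: "\<forall>\<^sub>F e in at_right (0::real). 0 < e \<and> e < 1"
    unfolding eventually_at_right_field by (intro exI[of _ 1]) auto
  fix a :: real assume a: "a < 1"
  have "((\<lambda>e. (1 - e) ^ 3) \<longlongrightarrow> 1) (at_right (0::real))" by (auto intro!: tendsto_eq_intros)
  hence "\<forall>\<^sub>F e in at_right 0. a < (1 - e) ^ 3" using a by (rule order_tendstoD)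
  then obtain e where e: "0 < e" "e < 1" "a < (1 - e) ^ 3"
    using eventually_happens'[OF trivial_limit_at_right_real eventually_conj[OF small]] by blast
  show "\<forall>\<^sub>F t in at_top. a < f (Finv f (u t)) / g t"
    using eventually_f_Finv_u_ge[OF unb e(1,2)] eventually_gt_at_top[of 0]
  proof eventually_elim
    case (elim t)
    hence "(1 - e) ^ 3 \<le> f (Finv f (u t)) / g t" using g_pos[of t] by (simp add: le_divide_eq)
    thus ?case using e by linarith
  qed
next
  have small: "\<forall>\<^sub>F e in at_right (0::real). 0 < e"
    unfolding eventually_at_right_field by (intro exI[of _ 1]) auto
  fix b :: real assume b: "1 < b"
  have "((\<lambda>e. (1 + e) ^ 3) \<longlongrightarrow> 1) (at_right (0::real))" by (auto intro!: tendsto_eq_intros)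
  hence "\<forall>\<^sub>F e in at_right 0. (1 + e) ^ 3 < b" using b by (rule order_tendstoD)
  then obtain e where e: "0 < e" "(1 + e) ^ 3 < b"
    using eventually_happens'[OF trivial_limit_at_right_real eventually_conj[OF small]] by blast
  show "\<forall>\<^sub>F t in at_top. f (Finv f (u t)) / g t < b"
    using eventually_f_Finv_u_le[OF unb e(1)] eventually_gt_at_top[of 0]
  proof eventually_elim
    case (elim t)
    hence "f (Finv f (u t)) / g t \<le> (1 + e) ^ 3" using g_pos[of t] by (simp add: divide_le_eq)
    thus ?case using e by linarith
  qed
qed

end

lemma Lambda_star_ex1:
  fixes \<beta> l :: real
  assumes beta: "\<beta> > 1" and l: "l > 0"
  shows "\<exists>!\<Lambda>. 0 < \<Lambda> \<and> \<Lambda> < 1 \<and> (1 - \<Lambda>) * \<Lambda> powr (- \<beta> / (\<beta> - 1)) = l"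
proof -
  define \<gamma> where "\<gamma> = - \<beta> / (\<beta> - 1)"
  define h where "h x = (1 - x) * x powr \<gamma>" for x :: real
  have \<gamma>: "\<gamma> \<le> -1" "\<gamma> < 0" using beta by (auto simp: \<gamma>_def field_simps)
  have dec: "h y < h x" if "0 < x" "x < y" "y < 1" for x y
  proof -
    have "y powr \<gamma> < x powr \<gamma>" using that \<gamma> by (intro powr_less_mono2_neg) auto
    thus ?thesis unfolding h_def using that by (intro mult_strict_mono) auto
  qed
  \<comment> \<open>\<open>h\<close> falls from at least \<open>l\<close> at \<open>a0\<close> to \<open>0\<close> at \<open>1\<close>.\<close>
  define a0 where "a0 = 1 / (2 * l + 2)"
  have a0: "0 < a0" "a0 \<le> 1/2" using l unfolding a0_def by (auto simp: field_simps)
  have "2 * l + 2 = a0 powr (-1)" using a0 by (simp add: powr_neg_one a0_def)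
  also have "\<dots> \<le> a0 powr \<gamma>" using a0 \<gamma> by (intro powr_mono') auto
  finally have "(1/2) * (2 * l + 2) \<le> h a0" unfolding h_def using a0 l by (intro mult_mono) auto
  moreover have "continuous_on {a0..1} h" unfolding h_def using a0 by (intro continuous_intros) auto
  ultimately obtain y where y: "a0 \<le> y" "y \<le> 1" "h y = l"
    using IVT2'[of h 1 l a0] a0 l by (auto simp: h_def)
  hence "0 < y \<and> y < 1 \<and> h y = l" using a0 l by (cases "y = 1") (auto simp: h_def)
  moreover have "z = y" if "0 < z \<and> z < 1 \<and> h z = l" for z
    using dec[of z y] dec[of y z] that \<open>0 < y \<and> y < 1 \<and> h y = l\<close> by (cases z y rule: linorder_cases) auto
  ultimately show ?thesis unfolding h_def \<gamma>_def by blast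
qed

section \<open>Solutions of \<open>x' = - f(x) + g(t)\<close>\<close>

lemma ode_solution_pos:
  fixes f g x :: "real \<Rightarrow> real"
  assumes x_cont: "continuous_on {0..} x" and x0: "x 0 > 0"
    and x_ode: "\<forall>t>0. (x has_real_derivative - f (x t) + g t) (at t)"
    and f0: "f 0 = 0" and f_sign: "\<forall>y. y \<noteq> 0 \<longrightarrow> y * f y > 0" and g_pos: "\<forall>t>0. g t > 0"
    and t: "t \<ge> 0"
  shows "x t > 0"
proof (rule ccontr)
  assume "\<not> x t > 0"
  moreover have "continuous_on {0..t} (\<lambda>s. - x s)"
    by (intro continuous_intros continuous_on_subset[OF x_cont]) auto
  moreover have "0 < t" using t x0 \<open>\<not> x t > 0\<close> by (cases "t = 0") auto
  \<comment> \<open>At the first zero \<open>c\<close> of \<open>x\<close> the equation forces \<open>x' c > 0\<close>, impossible when coming from above.\<close>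
  ultimately obtain c where c: "0 < c" "x c \<le> 0" "\<And>s. 0 \<le> s \<Longrightarrow> s < c \<Longrightarrow> x s > 0"
    using exists_first_nonneg[of 0 t "\<lambda>s. - x s"] x0 by auto
  have "f (x c) \<le> 0" using c(2) f0 f_sign[rule_format, of "x c"] by (cases "x c = 0") (auto simp: zero_less_mult_iff)
  hence "- f (x c) + g c > 0" using g_pos c(1) by auto
  then obtain d where d: "d > 0" "\<And>h. h > 0 \<Longrightarrow> h < d \<Longrightarrow> x (c - h) < x c"
    using DERIV_pos_inc_left[of x "- f (x c) + g c" c] x_ode c(1) by blast
  have "x (c - min (d/2) (c/2)) < x c" using d c(1) by (intro d(2)) auto
  moreover have "x (c - min (d/2) (c/2)) > 0" using c d by (intro c(3)) auto
  ultimately show False using c(2) by linarith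
qed

context rv_zero
begin

lemma transformed_equation_Fint_solution:
  fixes g x :: "real \<Rightarrow> real"
  assumes g_cont: "continuous_on {0<..} g" and g_pos: "\<And>t. t > 0 \<Longrightarrow> g t > 0"
    and g_rv: "\<And>c. c > 0 \<Longrightarrow> ((\<lambda>t. g (c * t) / g t) \<longlongrightarrow> c powr (- \<theta>)) at_top"
    and x_cont: "continuous_on {0..} x" and x_pos: "\<And>t. t \<ge> 0 \<Longrightarrow> x t > 0"
    and x_ode: "\<And>t. t > 0 \<Longrightarrow> (x has_real_derivative - f (x t) + g t) (at t)"
    and x_lim: "(x \<longlongrightarrow> 0) at_top"
  shows "transformed_equation f \<beta> g (\<lambda>t. Fint f (x t)) \<theta>"
proof -
  have f_x: "f (Finv f (Fint f (x t))) = f (x t)" if "t \<ge> 0" for t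
    using Finv_Fint x_pos[OF that] by simp
  show ?thesis
  proof (unfold_locales)
    fix t :: real assume t: "t > 0"
    have "((\<lambda>s. Fint f (x s)) has_real_derivative - (1 / f (x t)) * (- f (x t) + g t)) (at t)"
      using DERIV_chain2[OF has_real_derivative_Fint[OF x_pos] x_ode[OF t]] t by simp
    moreover have "- (1 / f (x t)) * (- f (x t) + g t) = 1 - g t / f (x t)"
      using f_pos[OF x_pos[of t]] t by (simp add: field_simps)
    ultimately show "((\<lambda>t. Fint f (x t)) has_real_derivative 1 - g t / f (Finv f (Fint f (x t)))) (at t)"
      using f_x[of t] t by simp
    show "f (Finv f (Fint f (x t))) > 0" using f_x[of t] f_pos x_pos t by simp
  next
    have "\<forall>\<^sub>F t in at_top. x t \<in> {0<..} \<and> x t \<noteq> 0"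
      using eventually_ge_at_top[of 0] by (rule eventually_mono) (use x_pos in fastforce)
    hence "filterlim x (at_right 0) at_top" using x_lim unfolding filterlim_at by simp
    thus "filterlim (\<lambda>t. Fint f (x t)) at_top at_top" by (rule filterlim_compose[OF Fint_tendsto_at_top])
  next
    have "continuous_on {0<..} (\<lambda>t. f (x t))"
      using x_pos by (intro continuous_on_compose2[OF f_cont continuous_on_subset[OF x_cont]]) auto
    thus "continuous_on {0<..} (\<lambda>t. f (Finv f (Fint f (x t))))"
      by (rule continuous_on_cong[THEN iffD1, rotated 2]) (auto simp: f_x)
  qed (use g_cont g_pos g_rv in auto)
qed

end

theorem theorem6:
  fixes f g x :: "real \<Rightarrow> real" and \<xi> \<beta> \<theta> :: real and L :: ereal
  assumes f_cont: "continuous_on UNIV f"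
    and f_loclip: "\<forall>y. \<exists>e>0. \<exists>K. K-lipschitz_on (cball y e) f"
    and f0: "f 0 = 0"
    and f_sign: "\<forall>y. y \<noteq> 0 \<longrightarrow> y * f y > 0"
    and g_cont: "continuous_on {0..} g"
    and g_pos: "\<forall>t>0. g t > 0"
    and xi_pos: "\<xi> > 0"
    and x_cont: "continuous_on {0..} x"
    and x_init: "x 0 = \<xi>"
    and x_ode: "\<forall>t>0. (x has_real_derivative (- f (x t) + g t)) (at t)"
    and beta: "\<beta> > 1" and f_RV: "RV0 \<beta> f"
    and theta: "\<theta> > 0" and g_RV: "RVinf (- \<theta>) g"
    and x_lim: "(x \<longlongrightarrow> 0) at_top"
    and L_nonneg: "L \<ge> 0"
    and L_lim: "((\<lambda>t. ereal (g t / f (Finv f t))) \<longlongrightarrow> L) at_top"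
  shows "(L = 0 \<longrightarrow> ((\<lambda>t. Fint f (x t) / t) \<longlongrightarrow> 1) at_top)
       \<and> (\<forall>l. L = ereal l \<and> 0 < l \<longrightarrow>
            (\<exists>!\<Lambda>. 0 < \<Lambda> \<and> \<Lambda> < 1 \<and> (1 - \<Lambda>) * \<Lambda> powr (- \<beta> / (\<beta> - 1)) = l)
          \<and> ((\<lambda>t. Fint f (x t) / t) \<longlongrightarrow>
               (THE \<Lambda>. 0 < \<Lambda> \<and> \<Lambda> < 1 \<and> (1 - \<Lambda>) * \<Lambda> powr (- \<beta> / (\<beta> - 1)) = l)) at_top)
       \<and> (L = \<infinity> \<longrightarrow> ((\<lambda>t. f (x t) / g t) \<longlongrightarrow> 1) at_top)"
proof -
  interpret rv_zero f \<beta>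
    using f_RV beta continuous_on_subset[OF f_cont] unfolding RV0_def by unfold_locales auto
  have x_pos: "x t > 0" if "t \<ge> 0" for t
    using ode_solution_pos[OF x_cont _ x_ode f0 f_sign g_pos that] x_init xi_pos by simp
  interpret transformed_equation f \<beta> g "\<lambda>t. Fint f (x t)" \<theta>
    using g_cont g_pos g_RV x_ode x_lim x_cont x_pos
    by (intro transformed_equation_Fint_solution continuous_on_subset[OF g_cont]) (auto simp: RVinf_def)
  have L_fin: "((\<lambda>t. g t / f (Finv f t)) \<longlongrightarrow> l) at_top" if "L = ereal l" for l
    using L_lim that by simp
  show ?thesis
  proof (intro conjI allI impI)
    assume "L = 0"
    thus "((\<lambda>t. Fint f (x t) / t) \<longlongrightarrow> 1) at_top" using u_over_t_tendsto[OF L_fin, of 0 1] by simp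
  next
    fix l assume l: "L = ereal l \<and> 0 < l"
    show ex1: "\<exists>!\<Lambda>. 0 < \<Lambda> \<and> \<Lambda> < 1 \<and> (1 - \<Lambda>) * \<Lambda> powr (- \<beta> / (\<beta> - 1)) = l"
      using Lambda_star_ex1[OF beta] l by blast
    show "((\<lambda>t. Fint f (x t) / t) \<longlongrightarrow> (THE \<Lambda>. 0 < \<Lambda> \<and> \<Lambda> < 1 \<and> (1 - \<Lambda>) * \<Lambda> powr (- \<beta> / (\<beta> - 1)) = l)) at_top"
      using theI'[OF ex1] l by (intro u_over_t_tendsto[OF L_fin]) auto
  next
    assume "L = \<infinity>"
    hence "\<forall>\<^sub>F t in at_top. M < g t / f (Finv f t)" for M using L_lim by (simp add: tendsto_PInfty)
    hence "((\<lambda>t. f (Finv f (Fint f (x t))) / g t) \<longlongrightarrow> 1) at_top" by (rule f_Finv_u_over_g_tendsto)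
    moreover have "\<forall>\<^sub>F t in at_top. f (Finv f (Fint f (x t))) / g t = f (x t) / g t"
      using eventually_ge_at_top[of 0] by (rule eventually_mono) (simp add: Finv_Fint x_pos)
    ultimately show "((\<lambda>t. f (x t) / g t) \<longlongrightarrow> 1) at_top" by (rule Lim_transform_eventually)
  qed
qed

end
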